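(* Let $R$ be a ring, $S$ a right Ore set of $R$, and $\mathfrak{a}=\mathrm{ass}_R(S)$. Then \begin{enumerate} \item $S$ is a right localizable set of $R$ if and only if $\mathfrak{a}'\neq R$, where $\mathfrak{a}'=\mathfrak{a}'(S)$. \item Suppose $\mathfrak{a}'\neq R$. Let $\pi':R\to R':=R/\mathfrak{a}'$, $r\mapsto r'=r+\mathfrak{a}'$, and $S'=\pi'(S)$. Then \begin{enumerate} \item $S'$ is a right denominator set of $R'$; \item $\mathfrak{a}=(\pi')^{-1}(\mathrm{ass}_r(S'))$; \item $R\langle S^{-1}\rangle\simeq R'S'^{-1}$, an $R$-isomorphism. \end{enumerate} \end{enumerate}
   Context: Rings are associative with $1$. Multiplicative set: $SS\subseteq S$, $1\in S$, $0\notin S$. Right Ore set: $rS\cap sR\ne\emptyset$ for all $r\in R,s\in S$; right denominator set: right Ore and $sr=0$ ($s\in S$) implies $rt=0$ for some $t\in S$; $AT^{-1}$ denotes the right Ore localization. $\mathrm{ass}_r(T)=\{a: at=0\text{ for some } t\in T\}$. $R\langle S^{-1}\rangle=R\langle X_S\rangle/I_S$ ($R\langle X_S\rangle$ freely generated by $R$ and noncommuting $x_s$; $I_S$ generated by $sx_s-1,x_ss-1$); $\mathrm{ass}_R(S)=\ker(R\to R\langle S^{-1}\rangle)$. $S$ is right localizable if $R\langle S^{-1}\rangle\ne0$ and every element has the form $(r+I_S)(x_s+I_S)$. For a ring $A$, $\mathcal{C}'_A=\{r\in A:rx=0\Rightarrow x=0\}$; $\mathfrak{a}'(S)$ is the least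 ideal $\mathfrak{b}$ of $R$ such that the image of $S$ in $R/\mathfrak{b}$ lies in $\mathcal{C}'_{R/\mathfrak{b}}$ (it exists). *)

theory Defs
  imports "HOL-Algebra.Algebra"
begin

definition mult_set :: "'a ring \<Rightarrow> 'a set \<Rightarrow> bool" where
  "mult_set R S \<longleftrightarrow> S \<subseteq> carrier R \<and> \<one>\<^bsub>R\<^esub> \<in> S \<and> \<zero>\<^bsub>R\<^esub> \<notin> S
     \<and> (\<forall>s\<in>S. \<forall>t\<in>S. s \<otimes>\<^bsub>R\<^esub> t \<in> S)"

definition right_ore_set :: "'a ring \<Rightarrow> 'a set \<Rightarrow> bool" where
  "right_ore_set R S \<longleftrightarrow> mult_set R S \<and>
     (\<forall>r\<in>carrier R. \<forall>s\<in>S. \<exists>t\<in>S. \<exists>r'\<in>carrier R. r \<otimes>\<^bsub>R\<^esub> t = s \<otimes>\<^bsub>R\<^esub> r')"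

definition right_denominator_set :: "'a ring \<Rightarrow> 'a set \<Rightarrow> bool" where
  "right_denominator_set R S \<longleftrightarrow> right_ore_set R S \<and>
     (\<forall>s\<in>S. \<forall>r\<in>carrier R. s \<otimes>\<^bsub>R\<^esub> r = \<zero>\<^bsub>R\<^esub> \<longrightarrow> (\<exists>t\<in>S. r \<otimes>\<^bsub>R\<^esub> t = \<zero>\<^bsub>R\<^esub>))"

definition ass_r :: "'a ring \<Rightarrow> 'a set \<Rightarrow> 'a set" where
  "ass_r R T = {a \<in> carrier R. \<exists>t\<in>T. a \<otimes>\<^bsub>R\<^esub> t = \<zero>\<^bsub>R\<^esub>}"

definition is_right_ring_of_fractions ::
  "'a ring \<Rightarrow> 'a set \<Rightarrow> 'b ring \<Rightarrow> ('a \<Rightarrow> 'b) \<Rightarrow> bool" where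
  "is_right_ring_of_fractions A T Q \<phi> \<longleftrightarrow> ring Q \<and> \<phi> \<in> ring_hom A Q
     \<and> (\<forall>t\<in>T. \<phi> t \<in> Units Q)
     \<and> (\<forall>q\<in>carrier Q. \<exists>a\<in>carrier A. \<exists>t\<in>T. q = \<phi> a \<otimes>\<^bsub>Q\<^esub> inv\<^bsub>Q\<^esub> (\<phi> t))
     \<and> a_kernel A Q \<phi> = ass_r A T"

text \<open>Free (noncommutative) ring Z<X> on a set of letters X: finitely supported integer
  valued functions on words over X, with convolution product.\<close>
definition free_ring :: "'x set \<Rightarrow> ('x list \<Rightarrow> int) ring" where
  "free_ring Ls = \<lparr>carrier = {f. finite {w. f w \<noteq> 0} \<and> (\<forall>w. f w \<noteq> 0 \<longrightarrow> set w \<subseteq> Ls)},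
     monoid.mult = (\<lambda>f g w. sum (\<lambda>i. f (take i w) * g (drop i w)) {..length w}),
     monoid.one = (\<lambda>w. if w = [] then 1 else 0),
     ring.zero = (\<lambda>w. 0),
     ring.add = (\<lambda>f g w. f w + g w)\<rparr>"

definition gen :: "'x \<Rightarrow> ('x list \<Rightarrow> int)" where
  "gen x = (\<lambda>w. if w = [x] then 1 else 0)"

definition fsub :: "('x list \<Rightarrow> int) \<Rightarrow> ('x list \<Rightarrow> int) \<Rightarrow> ('x list \<Rightarrow> int)" where
  "fsub f g = (\<lambda>w. f w - g w)"

text \<open>Letters: Inl r for r in R, Inr s standing for x_s (s in S).\<close>
definition loc_letters :: "'a ring \<Rightarrow> 'a set \<Rightarrow> ('a + 'a) set" where
  "loc_letters R S = Inl ` carrier R \<union> Inr ` S"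

abbreviation FR :: "'a ring \<Rightarrow> 'a set \<Rightarrow> (('a + 'a) list \<Rightarrow> int) ring" where
  "FR R S \<equiv> free_ring (loc_letters R S)"

text \<open>Relations of R (so that FR/<R-relations> is R<X_S>, the ring freely generated by R and
  the x_s) together with the relations s x_s - 1, x_s s - 1 generating I_S.\<close>
definition loc_relations :: "'a ring \<Rightarrow> 'a set \<Rightarrow> (('a + 'a) list \<Rightarrow> int) set" where
  "loc_relations R S =
     {fsub (gen (Inl (a \<oplus>\<^bsub>R\<^esub> b))) (gen (Inl a) \<oplus>\<^bsub>FR R S\<^esub> gen (Inl b)) | a b. a \<in> carrier R \<and> b \<in> carrier R}
   \<union> {fsub (gen (Inl (a \<otimes>\<^bsub>R\<^esub> b))) (gen (Inl a) \<otimes>\<^bsub>FR R S\<^esub> gen (Inl b)) | a b. a \<in> carrier R \<and> b \<in> carrier R}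
   \<union> {fsub (gen (Inl \<one>\<^bsub>R\<^esub>)) \<one>\<^bsub>FR R S\<^esub>}
   \<union> {fsub (gen (Inl s) \<otimes>\<^bsub>FR R S\<^esub> gen (Inr s)) \<one>\<^bsub>FR R S\<^esub> | s. s \<in> S}
   \<union> {fsub (gen (Inr s) \<otimes>\<^bsub>FR R S\<^esub> gen (Inl s)) \<one>\<^bsub>FR R S\<^esub> | s. s \<in> S}"

definition loc_ideal :: "'a ring \<Rightarrow> 'a set \<Rightarrow> (('a + 'a) list \<Rightarrow> int) set" where
  "loc_ideal R S = genideal (FR R S) (loc_relations R S)"

definition univ_loc :: "'a ring \<Rightarrow> 'a set \<Rightarrow> (('a + 'a) list \<Rightarrow> int) set ring" where
  "univ_loc R S = FR R S Quot loc_ideal R S"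

definition loc_can :: "'a ring \<Rightarrow> 'a set \<Rightarrow> 'a \<Rightarrow> (('a + 'a) list \<Rightarrow> int) set" where
  "loc_can R S r = loc_ideal R S +>\<^bsub>FR R S\<^esub> gen (Inl r)"

definition loc_x :: "'a ring \<Rightarrow> 'a set \<Rightarrow> 'a \<Rightarrow> (('a + 'a) list \<Rightarrow> int) set" where
  "loc_x R S s = loc_ideal R S +>\<^bsub>FR R S\<^esub> gen (Inr s)"

definition ass_R :: "'a ring \<Rightarrow> 'a set \<Rightarrow> 'a set" where
  "ass_R R S = a_kernel R (univ_loc R S) (loc_can R S)"

definition right_localizable :: "'a ring \<Rightarrow> 'a set \<Rightarrow> bool" where
  "right_localizable R S \<longleftrightarrow> \<one>\<^bsub>univ_loc R S\<^esub> \<noteq> \<zero>\<^bsub>univ_loc R S\<^esub>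
     \<and> (\<forall>q\<in>carrier (univ_loc R S). \<exists>r\<in>carrier R. \<exists>s\<in>S.
          q = loc_can R S r \<otimes>\<^bsub>univ_loc R S\<^esub> loc_x R S s)"

definition C' :: "('b, 'm) ring_scheme \<Rightarrow> 'b set" where
  "C' A = {r \<in> carrier A. \<forall>x\<in>carrier A. r \<otimes>\<^bsub>A\<^esub> x = \<zero>\<^bsub>A\<^esub> \<longrightarrow> x = \<zero>\<^bsub>A\<^esub>}"

definition a'_cond :: "'a ring \<Rightarrow> 'a set \<Rightarrow> 'a set \<Rightarrow> bool" where
  "a'_cond R S b \<longleftrightarrow> ideal b R \<and> (\<forall>s\<in>S. b +>\<^bsub>R\<^esub> s \<in> C' (R Quot b))"

definition a' :: "'a ring \<Rightarrow> 'a set \<Rightarrow> 'a set" where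
  "a' R S = (THE b. a'_cond R S b \<and> (\<forall>c. a'_cond R S c \<longrightarrow> b \<subseteq> c))"

end

(*
  Modulo an ideal b, the image of s is left regular iff s x : b implies x : b, so a'(S) is the
  intersection of all ideals with this cancellation property. The kernel ass_R(S) of R -> R<S^-1>
  has it because S becomes invertible; hence a'(S) is contained in ass_R(S), and a'(S) = R forces
  R<S^-1> = 0.

  Conversely, if a'(S) is proper then S' is a right Ore set of left regular elements of R' = R/a'(S),
  hence a right denominator set. Modulo ass_r(S') it becomes regular on both sides, and the classical
  construction of right fractions a s^-1 yields a ring in which S' is invertible and whose kernel on R'
  is exactly ass_r(S'). Mapping R<S^-1> to it by the universal property shows that ass_R(S) is the
  preimage of ass_r(S'). Finally the Ore condition makes the elements r x_s a subring of R<S^-1>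
  containing the generators, so every element has this form: R' -> R<S^-1> is a right ring of
  fractions, and the universal map from R<S^-1> to any other one is an isomorphism.
*)

theory Submission
  imports Defs
begin

section \<open>The free ring on a set of letters\<close>

definition word_conv :: "('x list \<Rightarrow> int) \<Rightarrow> ('x list \<Rightarrow> int) \<Rightarrow> ('x list \<Rightarrow> int)" where
  "word_conv f g = (\<lambda>w. \<Sum>i\<le>length w. f (take i w) * g (drop i w))"

definition word_supp :: "('x list \<Rightarrow> int) \<Rightarrow> 'x list set" where
  "word_supp f = {w. f w \<noteq> 0}"

definition word_monom :: "int \<Rightarrow> 'x list \<Rightarrow> ('x list \<Rightarrow> int)" where
  "word_monom k u = (\<lambda>w. if w = u then k else 0)"

lemma free_ring_carrier:
  "carrier (free_ring Ls) = {f. finite (word_supp f) \<and> (\<forall>w. f w \<noteq> 0 \<longrightarrow> set w \<subseteq> Ls)}"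
  by (simp add: free_ring_def word_supp_def)

lemma free_ring_mult: "f \<otimes>\<^bsub>free_ring Ls\<^esub> g = word_conv f g"
  by (simp add: free_ring_def word_conv_def)

lemma free_ring_add: "f \<oplus>\<^bsub>free_ring Ls\<^esub> g = (\<lambda>w. f w + g w)"
  by (simp add: free_ring_def)

lemma free_ring_zero: "\<zero>\<^bsub>free_ring Ls\<^esub> = (\<lambda>w. 0)"
  by (simp add: free_ring_def)

lemma free_ring_one: "\<one>\<^bsub>free_ring Ls\<^esub> = word_monom 1 []"
  by (simp add: free_ring_def word_monom_def fun_eq_iff)

lemma free_ring_carrierI:
  assumes "finite (word_supp f)" "\<And>w. f w \<noteq> 0 \<Longrightarrow> set w \<subseteq> Ls"
  shows "f \<in> carrier (free_ring Ls)"
  using assms by (simp add: free_ring_carrier)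

lemma free_ring_carrierD:
  assumes "f \<in> carrier (free_ring Ls)"
  shows "finite (word_supp f)" "f w \<noteq> 0 \<Longrightarrow> set w \<subseteq> Ls"
  using assms by (auto simp: free_ring_carrier)

lemma sum_triangle_swap:
  fixes F :: "nat \<Rightarrow> nat \<Rightarrow> 'a::comm_monoid_add"
  shows "(\<Sum>i\<le>n. \<Sum>j\<le>i. F j i) = (\<Sum>j\<le>n. \<Sum>i\<in>{j..n}. F j i)"
proof (induction n)
  case (Suc n)
  have "(\<Sum>j\<le>Suc n. \<Sum>i\<in>{j..Suc n}. F j i)
      = (\<Sum>j\<le>n. (\<Sum>i\<in>{j..n}. F j i) + F j (Suc n)) + F (Suc n) (Suc n)"
    by (simp add: sum.atLeast_Suc_atMost_Suc_shift)
  also have "\<dots> = (\<Sum>j\<le>n. \<Sum>i\<in>{j..n}. F j i) + (\<Sum>j\<le>Suc n. F j (Suc n))"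
    by (simp add: sum.distrib add.assoc)
  finally show ?case using Suc by simp
qed simp

lemma sum_atLeastAtMost_shift:
  fixes j n :: nat
  shows "j \<le> n \<Longrightarrow> (\<Sum>i\<in>{j..n}. g i) = (\<Sum>k\<le>n - j. g (j + k))"
  using sum.atLeastAtMost_shift_0[of j n g] by (simp add: atLeast0AtMost comp_def)

lemma word_conv_assoc:
  fixes f g h :: "'x list \<Rightarrow> int"
  shows "word_conv (word_conv f g) h = word_conv f (word_conv g h)"
proof
  fix w :: "'x list"
  define n where "n = length w"
  have "word_conv (word_conv f g) h w
      = (\<Sum>i\<le>n. \<Sum>j\<le>i. f (take j w) * g (take (i - j) (drop j w)) * h (drop i w))"
    unfolding word_conv_def n_def
    by (intro sum.cong refl) (auto simp: sum_distrib_right min_def take_take drop_take)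
  also have "\<dots> = (\<Sum>j\<le>n. \<Sum>i\<in>{j..n}. f (take j w) * g (take (i - j) (drop j w)) * h (drop i w))"
    by (rule sum_triangle_swap)
  also have "\<dots> = (\<Sum>j\<le>n. \<Sum>k\<le>n - j. f (take j w) * g (take k (drop j w)) * h (drop (j + k) w))"
    by (rule sum.cong[OF refl]) (simp add: sum_atLeastAtMost_shift)
  also have "\<dots> = word_conv f (word_conv g h) w"
    unfolding word_conv_def n_def
    by (intro sum.cong refl) (auto simp: sum_distrib_left mult.assoc add.commute)
  finally show "word_conv (word_conv f g) h w = word_conv f (word_conv g h) w" .
qed

lemma word_conv_one_left: "word_conv (word_monom 1 []) f = f"
proof
  fix w
  have "word_conv (word_monom 1 []) f w = (\<Sum>i\<le>length w. if i = 0 then f w else 0)"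
    unfolding word_conv_def word_monom_def by (intro sum.cong refl) auto
  then show "word_conv (word_monom 1 []) f w = f w" by simp
qed

lemma word_conv_one_right: "word_conv f (word_monom 1 []) = f"
proof
  fix w
  have "word_conv f (word_monom 1 []) w = (\<Sum>i\<le>length w. if i = length w then f w else 0)"
    unfolding word_conv_def word_monom_def by (intro sum.cong refl) auto
  then show "word_conv f (word_monom 1 []) w = f w" by simp
qed

lemma word_conv_add_right:
  "word_conv f (\<lambda>w. g w + h w) = (\<lambda>w. word_conv f g w + word_conv f h w)"
  unfolding word_conv_def by (simp add: distrib_left sum.distrib)

lemma word_conv_add_left:
  "word_conv (\<lambda>w. g w + h w) f = (\<lambda>w. word_conv g f w + word_conv h f w)"
  unfolding word_conv_def by (simp add: distrib_right sum.distrib)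

lemma word_supp_conv:
  "word_supp (word_conv f g) \<subseteq> (\<lambda>(u, v). u @ v) ` (word_supp f \<times> word_supp g)"
proof
  fix w assume "w \<in> word_supp (word_conv f g)"
  then obtain i where "f (take i w) * g (drop i w) \<noteq> 0"
    by (metis (mono_tags, lifting) word_supp_def word_conv_def mem_Collect_eq sum.neutral)
  then show "w \<in> (\<lambda>(u, v). u @ v) ` (word_supp f \<times> word_supp g)"
    by (auto simp: word_supp_def image_iff) (metis append_take_drop_id)
qed

lemma free_ring_add_closed:
  assumes "f \<in> carrier (free_ring Ls)" "g \<in> carrier (free_ring Ls)"
  shows "(\<lambda>w. f w + g w) \<in> carrier (free_ring Ls)"
proof (rule free_ring_carrierI)
  have "word_supp (\<lambda>w. f w + g w) \<subseteq> word_supp f \<union> word_supp g"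
    by (auto simp: word_supp_def)
  then show "finite (word_supp (\<lambda>w. f w + g w))"
    using free_ring_carrierD(1)[OF assms(1)] free_ring_carrierD(1)[OF assms(2)]
    by (meson finite_Un finite_subset)
next
  fix w assume "f w + g w \<noteq> 0"
  then have "f w \<noteq> 0 \<or> g w \<noteq> 0" by auto
  then show "set w \<subseteq> Ls"
    using free_ring_carrierD(2)[OF assms(1)] free_ring_carrierD(2)[OF assms(2)] by blast
qed

lemma free_ring_conv_closed:
  assumes "f \<in> carrier (free_ring Ls)" "g \<in> carrier (free_ring Ls)"
  shows "word_conv f g \<in> carrier (free_ring Ls)"
proof (rule free_ring_carrierI)
  show "finite (word_supp (word_conv f g))"
    using word_supp_conv[of f g] free_ring_carrierD(1)[OF assms(1)] free_ring_carrierD(1)[OF assms(2)]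
    by (meson finite_SigmaI finite_imageI finite_subset)
  fix w assume "word_conv f g w \<noteq> 0"
  then have "w \<in> (\<lambda>(u, v). u @ v) ` (word_supp f \<times> word_supp g)"
    using word_supp_conv[of f g] by (auto simp: word_supp_def)
  then obtain u v where "w = u @ v" "f u \<noteq> 0" "g v \<noteq> 0"
    by (auto simp: word_supp_def)
  then show "set w \<subseteq> Ls"
    using free_ring_carrierD(2)[OF assms(1)] free_ring_carrierD(2)[OF assms(2)] by auto
qed

lemma free_ring_monom_closed:
  assumes "set u \<subseteq> Ls"
  shows "word_monom k u \<in> carrier (free_ring Ls)"
proof (rule free_ring_carrierI)
  show "finite (word_supp (word_monom k u))"
    by (rule finite_subset[of _ "{u}"]) (auto simp: word_supp_def word_monom_def)
qed (use assms in \<open>auto simp: word_monom_def split: if_splits\<close>)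

lemma ring_free_ring: "ring (free_ring Ls)"
proof (rule ringI)
  show "abelian_group (free_ring Ls)"
  proof (rule abelian_groupI)
    fix f assume f: "f \<in> carrier (free_ring Ls)"
    have "(\<lambda>w. - f w) \<in> carrier (free_ring Ls)"
      using free_ring_carrierD[OF f] by (intro free_ring_carrierI) (auto simp: word_supp_def)
    then show "\<exists>g\<in>carrier (free_ring Ls). g \<oplus>\<^bsub>free_ring Ls\<^esub> f = \<zero>\<^bsub>free_ring Ls\<^esub>"
      by (intro bexI) (auto simp: free_ring_add free_ring_zero)
  next
    show "\<zero>\<^bsub>free_ring Ls\<^esub> \<in> carrier (free_ring Ls)"
      by (simp add: free_ring_zero free_ring_carrier word_supp_def)
  qed (simp_all add: free_ring_add free_ring_zero free_ring_add_closed add_ac)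
  show "monoid (free_ring Ls)"
    by (rule monoidI)
       (auto simp: free_ring_mult free_ring_one free_ring_conv_closed free_ring_monom_closed
         word_conv_assoc word_conv_one_left word_conv_one_right)
qed (simp_all add: free_ring_mult free_ring_add word_conv_add_left word_conv_add_right)

lemma free_ring_minus:
  assumes "f \<in> carrier (free_ring Ls)"
  shows "\<ominus>\<^bsub>free_ring Ls\<^esub> f = (\<lambda>w. - f w)"
proof -
  interpret ring "free_ring Ls" by (rule ring_free_ring)
  have "(\<lambda>w. - f w) \<in> carrier (free_ring Ls)"
    using free_ring_carrierD[OF assms] by (intro free_ring_carrierI) (auto simp: word_supp_def)
  then show ?thesis
    by (intro minus_equality) (use assms in \<open>auto simp: free_ring_add free_ring_zero\<close>)
qed

lemma free_ring_finsum:
  assumes "finite A" "f \<in> A \<rightarrow> carrier (free_ring Ls)"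
  shows "finsum (free_ring Ls) f A = (\<lambda>w. \<Sum>a\<in>A. f a w)"
  using assms
proof (induction A rule: finite_induct)
  interpret ring "free_ring Ls" by (rule ring_free_ring)
  case empty
  then show ?case by (simp add: free_ring_zero)
next
  interpret ring "free_ring Ls" by (rule ring_free_ring)
  case (insert x A)
  then show ?case by (simp add: finsum_insert free_ring_add)
qed

lemma free_ring_monom_decomp:
  assumes f: "f \<in> carrier (free_ring Ls)"
  shows "f = finsum (free_ring Ls) (\<lambda>u. word_monom (f u) u) (word_supp f)"
proof -
  have "(\<lambda>u. word_monom (f u) u) \<in> word_supp f \<rightarrow> carrier (free_ring Ls)"
    using free_ring_carrierD(2)[OF f] by (auto intro!: free_ring_monom_closed simp: word_supp_def)
  then show ?thesis
    using free_ring_carrierD(1)[OF f]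
    by (simp add: free_ring_finsum word_monom_def fun_eq_iff word_supp_def)
qed

lemma gen_eq_word_monom: "gen x = word_monom 1 [x]"
  by (simp add: gen_def word_monom_def fun_eq_iff)

lemma word_conv_monom_left:
  "word_conv (word_monom k u) g
     = (\<lambda>w. if take (length u) w = u then k * g (drop (length u) w) else 0)"
proof
  fix w
  have "word_conv (word_monom k u) g w = (\<Sum>i\<le>length w. if i = length u then
          (if take (length u) w = u then k * g (drop (length u) w) else 0) else 0)"
    unfolding word_conv_def word_monom_def by (intro sum.cong refl) auto
  also have "\<dots> = (if take (length u) w = u then k * g (drop (length u) w) else 0)"
  proof (cases "length u \<le> length w")
    case False
    then have "length (take (length u) w) \<noteq> length u" by simp
    then show ?thesis by fastforce
  qed simp
  finally show "word_conv (word_monom k u) g w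
      = (if take (length u) w = u then k * g (drop (length u) w) else 0)" .
qed

lemma word_conv_gen_monom: "word_conv (gen x) (word_monom k u) = word_monom k (x # u)"
proof
  fix w
  show "word_conv (gen x) (word_monom k u) w = word_monom k (x # u) w"
    unfolding gen_eq_word_monom word_conv_monom_left by (cases w) (auto simp: word_monom_def)
qed

definition word_prod :: "('b, 'm) ring_scheme \<Rightarrow> ('x \<Rightarrow> 'b) \<Rightarrow> 'x list \<Rightarrow> 'b" where
  "word_prod Q e w = foldr (\<lambda>x acc. e x \<otimes>\<^bsub>Q\<^esub> acc) w \<one>\<^bsub>Q\<^esub>"

definition free_ring_eval :: "('b, 'm) ring_scheme \<Rightarrow> ('x \<Rightarrow> 'b) \<Rightarrow> ('x list \<Rightarrow> int) \<Rightarrow> 'b" where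
  "free_ring_eval Q e f = finsum Q (\<lambda>w. add_pow Q (f w) (word_prod Q e w)) (word_supp f)"

context ring
begin

lemma word_prod_Nil [simp]: "word_prod R e [] = \<one>"
  by (simp add: word_prod_def)

lemma word_prod_Cons [simp]: "word_prod R e (x # w) = e x \<otimes> word_prod R e w"
  by (simp add: word_prod_def)

lemma word_prod_closed:
  assumes "e ` Ls \<subseteq> carrier R" "set w \<subseteq> Ls"
  shows "word_prod R e w \<in> carrier R"
  using assms(2) by (induction w) (use assms(1) in auto)

lemma word_prod_append:
  assumes e: "e ` Ls \<subseteq> carrier R" and "set u \<subseteq> Ls" "set v \<subseteq> Ls"
  shows "word_prod R e (u @ v) = word_prod R e u \<otimes> word_prod R e v"
  using assms(2)
proof (induction u)
  case (Cons x u)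
  then have "e x \<in> carrier R" using e by auto
  with Cons show ?case
    using word_prod_closed[OF e assms(3)] word_prod_closed[OF e, of u] by (simp add: m_assoc)
qed (simp add: word_prod_closed[OF e assms(3)])

lemma free_ring_eval_superset:
  assumes e: "e ` Ls \<subseteq> carrier R"
    and W: "finite W" "word_supp f \<subseteq> W" "\<And>w. w \<in> W \<Longrightarrow> set w \<subseteq> Ls"
  shows "free_ring_eval R e f = (\<Oplus>w\<in>W. add_pow R (f w) (word_prod R e w))"
  unfolding free_ring_eval_def
proof (rule add.finprod_mono_neutral_cong_left)
  show "(\<lambda>w. add_pow R (f w) (word_prod R e w)) \<in> W \<rightarrow> carrier R"
    using W(3) word_prod_closed[OF e] by auto
qed (use W in \<open>auto simp: word_supp_def add_pow_def\<close>)

lemma free_ring_eval_closed: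
  assumes e: "e ` Ls \<subseteq> carrier R" and f: "f \<in> carrier (free_ring Ls)"
  shows "free_ring_eval R e f \<in> carrier R"
  unfolding free_ring_eval_def
  by (rule finsum_closed)
     (use word_prod_closed[OF e] free_ring_carrierD(2)[OF f] in \<open>auto simp: word_supp_def\<close>)

lemma free_ring_eval_add:
  assumes e: "e ` Ls \<subseteq> carrier R"
    and f: "f \<in> carrier (free_ring Ls)" and g: "g \<in> carrier (free_ring Ls)"
  shows "free_ring_eval R e (\<lambda>w. f w + g w) = free_ring_eval R e f \<oplus> free_ring_eval R e g"
proof -
  define W where "W = word_supp f \<union> word_supp g"
  have W: "finite W" "\<And>w. w \<in> W \<Longrightarrow> set w \<subseteq> Ls"
    using free_ring_carrierD[OF f] free_ring_carrierD[OF g] by (auto simp: W_def word_supp_def)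
  have "free_ring_eval R e (\<lambda>w. f w + g w) = (\<Oplus>w\<in>W. add_pow R (f w + g w) (word_prod R e w))"
    by (rule free_ring_eval_superset[OF e W(1) _ W(2)]) (auto simp: W_def word_supp_def)
  also have "\<dots> = (\<Oplus>w\<in>W. add_pow R (f w) (word_prod R e w) \<oplus> add_pow R (g w) (word_prod R e w))"
    by (intro add.finprod_cong' refl) (use W word_prod_closed[OF e] add.int_pow_mult in auto)
  also have "\<dots> = (\<Oplus>w\<in>W. add_pow R (f w) (word_prod R e w)) \<oplus> (\<Oplus>w\<in>W. add_pow R (g w) (word_prod R e w))"
    by (rule finsum_addf) (use W word_prod_closed[OF e] in auto)
  also have "\<dots> = free_ring_eval R e f \<oplus> free_ring_eval R e g"
    using free_ring_eval_superset[OF e W(1) _ W(2), of f] free_ring_eval_superset[OF e W(1) _ W(2), of g]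
    by (simp add: W_def)
  finally show ?thesis .
qed

lemma free_ring_eval_conv_monom:
  assumes e: "e ` Ls \<subseteq> carrier R" and u: "set u \<subseteq> Ls" and g: "g \<in> carrier (free_ring Ls)"
  shows "free_ring_eval R e (word_conv (word_monom k u) g)
    = add_pow R k (word_prod R e u) \<otimes> free_ring_eval R e g"
proof -
  define h where "h = word_conv (word_monom k u) g"
  have h: "h w = (if take (length u) w = u then k * g (drop (length u) w) else 0)" for w
    unfolding h_def word_conv_monom_left by simp
  have gL: "\<And>v. v \<in> word_supp g \<Longrightarrow> set v \<subseteq> Ls"
    using free_ring_carrierD(2)[OF g] by (auto simp: word_supp_def)
  have pu: "word_prod R e u \<in> carrier R" using word_prod_closed[OF e u] .
  have supp_h: "word_supp h \<subseteq> (\<lambda>v. u @ v) ` word_supp g"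
  proof
    fix w assume "w \<in> word_supp h"
    then have "take (length u) w = u" "g (drop (length u) w) \<noteq> 0"
      by (auto simp: word_supp_def h split: if_splits)
    then show "w \<in> (\<lambda>v. u @ v) ` word_supp g"
      by (auto simp: word_supp_def image_iff) (metis append_take_drop_id)
  qed
  have "free_ring_eval R e h = (\<Oplus>w\<in>(\<lambda>v. u @ v) ` word_supp g. add_pow R (h w) (word_prod R e w))"
    by (rule free_ring_eval_superset[OF e _ supp_h])
       (use free_ring_carrierD(1)[OF g] u gL in \<open>auto dest!: gL\<close>)
  also have "\<dots> = (\<Oplus>v\<in>word_supp g. add_pow R (h (u @ v)) (word_prod R e (u @ v)))"
    by (rule add.finprod_reindex) (use u gL word_prod_closed[OF e] in \<open>auto simp: inj_on_def\<close>)
  also have "\<dots> = (\<Oplus>v\<in>word_supp g. add_pow R k (word_prod R e u) \<otimes> add_pow R (g v) (word_prod R e v))"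
  proof (intro add.finprod_cong' refl)
    fix v assume v: "v \<in> word_supp g"
    have pv: "word_prod R e v \<in> carrier R" using word_prod_closed[OF e gL[OF v]] .
    show "add_pow R (h (u @ v)) (word_prod R e (u @ v))
        = add_pow R k (word_prod R e u) \<otimes> add_pow R (g v) (word_prod R e v)"
      using pu pv by (simp add: h word_prod_append[OF e u gL[OF v]] add_pow_ldistr_int
          add_pow_rdistr_int add.int_pow_pow mult.commute)
  qed (use word_prod_closed[OF e] pu gL in auto)
  also have "\<dots> = add_pow R k (word_prod R e u) \<otimes> (\<Oplus>v\<in>word_supp g. add_pow R (g v) (word_prod R e v))"
    by (rule finsum_rdistr[symmetric])
       (use free_ring_carrierD(1)[OF g] word_prod_closed[OF e] pu gL in auto)
  finally show ?thesis by (simp add: h_def free_ring_eval_def)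
qed

lemma free_ring_eval_finsum:
  assumes e: "e ` Ls \<subseteq> carrier R" and "finite A" and "f \<in> A \<rightarrow> carrier (free_ring Ls)"
  shows "free_ring_eval R e (finsum (free_ring Ls) f A) = (\<Oplus>a\<in>A. free_ring_eval R e (f a))"
  using assms(2,3)
proof (induction A rule: finite_induct)
  interpret F: ring "free_ring Ls" by (rule ring_free_ring)
  case empty
  then show ?case by (simp add: free_ring_zero free_ring_eval_def word_supp_def)
next
  interpret F: ring "free_ring Ls" by (rule ring_free_ring)
  case (insert x A)
  then have "f x \<in> carrier (free_ring Ls)" "f \<in> A \<rightarrow> carrier (free_ring Ls)" by auto
  with insert show ?case
    by (simp add: F.finsum_insert free_ring_add free_ring_eval_add[OF e] F.finsum_closed
        finsum_insert free_ring_eval_closed[OF e] Pi_def)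
qed

lemma free_ring_eval_conv:
  assumes e: "e ` Ls \<subseteq> carrier R"
    and f: "f \<in> carrier (free_ring Ls)" and g: "g \<in> carrier (free_ring Ls)"
  shows "free_ring_eval R e (word_conv f g) = free_ring_eval R e f \<otimes> free_ring_eval R e g"
proof -
  interpret F: ring "free_ring Ls" by (rule ring_free_ring)
  have fin: "finite (word_supp f)" using free_ring_carrierD(1)[OF f] .
  have fL: "\<And>v. v \<in> word_supp f \<Longrightarrow> set v \<subseteq> Ls"
    using free_ring_carrierD(2)[OF f] by (auto simp: word_supp_def)
  have "word_conv f g
      = finsum (free_ring Ls) (\<lambda>u. word_monom (f u) u) (word_supp f) \<otimes>\<^bsub>free_ring Ls\<^esub> g"
    using free_ring_monom_decomp[OF f] by (simp add: free_ring_mult)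
  also have "\<dots> = finsum (free_ring Ls) (\<lambda>u. word_conv (word_monom (f u) u) g) (word_supp f)"
    by (subst F.finsum_ldistr[OF fin g]) (use fL in \<open>auto intro: free_ring_monom_closed simp: free_ring_mult\<close>)
  finally have "free_ring_eval R e (word_conv f g)
      = (\<Oplus>u\<in>word_supp f. free_ring_eval R e (word_conv (word_monom (f u) u) g))"
    using fL g
    by (simp add: free_ring_eval_finsum[OF e fin] Pi_def free_ring_conv_closed free_ring_monom_closed)
  also have "\<dots> = (\<Oplus>u\<in>word_supp f. add_pow R (f u) (word_prod R e u) \<otimes> free_ring_eval R e g)"
    by (intro add.finprod_cong' refl) (use free_ring_eval_conv_monom[OF e fL g] fL
        word_prod_closed[OF e] free_ring_eval_closed[OF e g] in auto)
  also have "\<dots> = (\<Oplus>u\<in>word_supp f. add_pow R (f u) (word_prod R e u)) \<otimes> free_ring_eval R e g"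
    by (rule finsum_ldistr[symmetric])
       (use fin fL word_prod_closed[OF e] free_ring_eval_closed[OF e g] in auto)
  finally show ?thesis by (simp add: free_ring_eval_def)
qed

lemma free_ring_eval_monom:
  assumes e: "e ` Ls \<subseteq> carrier R" and u: "set u \<subseteq> Ls"
  shows "free_ring_eval R e (word_monom k u) = add_pow R k (word_prod R e u)"
proof -
  have "free_ring_eval R e (word_monom k u) = (\<Oplus>w\<in>{u}. add_pow R (word_monom k u w) (word_prod R e w))"
    by (rule free_ring_eval_superset[OF e]) (use u in \<open>auto simp: word_supp_def word_monom_def\<close>)
  then show ?thesis using word_prod_closed[OF e u] by (simp add: word_monom_def)
qed

lemma free_ring_eval_hom:
  assumes e: "e ` Ls \<subseteq> carrier R"
  shows "free_ring_eval R e \<in> ring_hom (free_ring Ls) R"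
  by (rule ring_hom_memI)
     (auto simp: free_ring_mult free_ring_add free_ring_one free_ring_eval_closed[OF e]
       free_ring_eval_conv[OF e] free_ring_eval_add[OF e] free_ring_eval_monom[OF e])

lemma free_ring_eval_gen:
  assumes e: "e ` Ls \<subseteq> carrier R" and "x \<in> Ls"
  shows "free_ring_eval R e (gen x) = e x"
  using free_ring_eval_monom[OF e, of "[x]" 1] assms by (auto simp: gen_eq_word_monom)

end

lemma FactRing_zero: "\<zero>\<^bsub>A Quot I\<^esub> = I"
  by (simp add: FactRing_def)

lemma FactRing_carrierE:
  assumes "C \<in> carrier (A Quot I)"
  obtains x where "x \<in> carrier A" "C = I +>\<^bsub>A\<^esub> x"
  using assms by (auto simp: FactRing_def A_RCOSETS_def')

lemma FactRing_carrierI: "x \<in> carrier A \<Longrightarrow> I +>\<^bsub>A\<^esub> x \<in> carrier (A Quot I)"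
  by (auto simp: FactRing_def A_RCOSETS_def')

lemma ball_FactRing_carrier:
  "(\<forall>C\<in>carrier (A Quot I). P C) \<longleftrightarrow> (\<forall>x\<in>carrier A. P (I +>\<^bsub>A\<^esub> x))"
  by (metis FactRing_carrierE FactRing_carrierI)

lemma (in ideal) FactRing_mult_rcos:
  "x \<in> carrier R \<Longrightarrow> y \<in> carrier R \<Longrightarrow> (I +> x) \<otimes>\<^bsub>R Quot I\<^esub> (I +> y) = I +> (x \<otimes> y)"
  by (simp add: FactRing_def rcoset_mult_add)

lemma (in ideal) rcos_eq_ideal_iff: "x \<in> carrier R \<Longrightarrow> I +> x = I \<longleftrightarrow> x \<in> I"
  using rcos_const_imp_mem a_rcos_zero[OF is_ideal] by blast

lemma (in ideal) rcos_eq_iff: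
  assumes "x \<in> carrier R" "y \<in> carrier R"
  shows "I +> x = I +> y \<longleftrightarrow> x \<ominus> y \<in> I"
  using a_rcos_module_minus[OF ring_axioms assms(2,1)] a_rcos_self[OF assms(1)]
    a_repr_independence'[OF _ assms(2)]
  by metis

definition quot_lift :: "('a \<Rightarrow> 'b) \<Rightarrow> 'a set \<Rightarrow> 'b" where
  "quot_lift h C = the_elem (h ` C)"

lemma quot_lift_rcos:
  assumes "ring A" "ring Q" "ideal I A" "h \<in> ring_hom A Q" "I \<subseteq> a_kernel A Q h"
    and x: "x \<in> carrier A"
  shows "quot_lift h (I +>\<^bsub>A\<^esub> x) = h x"
proof -
  interpret A: ring A by fact
  interpret I: ideal I A by fact
  interpret h: ring_hom_ring A Q h by (intro ring_hom_ringI2 assms(1,2,4))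
  have "h i = \<zero>\<^bsub>Q\<^esub>" if "i \<in> I" for i
    using that assms(5) unfolding a_kernel_def' by blast
  then have "h ` (I +>\<^bsub>A\<^esub> x) = {h x}"
    using x I.zero_closed by (force simp: a_r_coset_def r_coset_def)
  then show ?thesis by (simp add: quot_lift_def)
qed

lemma quot_lift_hom:
  assumes A: "ring A" and Q: "ring Q" and I: "ideal I A" and h: "h \<in> ring_hom A Q"
    and ker: "I \<subseteq> a_kernel A Q h"
  shows "quot_lift h \<in> ring_hom (A Quot I) Q"
proof -
  interpret I: ideal I A by fact
  interpret h: ring_hom_ring A Q h by (intro ring_hom_ringI2 A Q h)
  note lift = quot_lift_rcos[OF A Q I h ker]
  show ?thesis
  proof (rule ring_hom_memI)
    fix C D assume "C \<in> carrier (A Quot I)" "D \<in> carrier (A Quot I)"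
    then obtain x y where "x \<in> carrier A" "C = I +>\<^bsub>A\<^esub> x" "y \<in> carrier A" "D = I +>\<^bsub>A\<^esub> y"
      by (metis FactRing_carrierE)
    then show "quot_lift h C \<in> carrier Q"
      and "quot_lift h (C \<otimes>\<^bsub>A Quot I\<^esub> D) = quot_lift h C \<otimes>\<^bsub>Q\<^esub> quot_lift h D"
      and "quot_lift h (C \<oplus>\<^bsub>A Quot I\<^esub> D) = quot_lift h C \<oplus>\<^bsub>Q\<^esub> quot_lift h D"
      by (simp_all add: lift FactRing_def I.rcoset_mult_add I.a_rcos_sum)
  qed (simp add: lift FactRing_def)
qed

section \<open>The universal localization \<open>R\<langle>S\<^sup>-\<^sup>1\<rangle>\<close>\<close>

locale univ_localization =
  fixes R :: "'a ring" and S :: "'a set"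
  assumes ring_R: "ring R" and S_subset: "S \<subseteq> carrier R"
begin

abbreviation FRS where "FRS \<equiv> FR R S"
abbreviation IS where "IS \<equiv> loc_ideal R S"
abbreviation U where "U \<equiv> univ_loc R S"
abbreviation lc where "lc \<equiv> loc_can R S"
abbreviation lx where "lx \<equiv> loc_x R S"

sublocale R: ring R by (rule ring_R)
sublocale FRS: ring FRS by (rule ring_free_ring)

lemma S_carrier [simp]: "s \<in> S \<Longrightarrow> s \<in> carrier R"
  using S_subset by blast

lemma Inl_loc_letters [simp]: "r \<in> carrier R \<Longrightarrow> Inl r \<in> loc_letters R S"
  by (simp add: loc_letters_def)

lemma Inr_loc_letters [simp]: "s \<in> S \<Longrightarrow> Inr s \<in> loc_letters R S"
  by (simp add: loc_letters_def)

lemma gen_Inl_closed [simp]: "r \<in> carrier R \<Longrightarrow> gen (Inl r) \<in> carrier FRS"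
  by (simp add: gen_eq_word_monom free_ring_monom_closed)

lemma gen_Inr_closed [simp]: "s \<in> S \<Longrightarrow> gen (Inr s) \<in> carrier FRS"
  by (simp add: gen_eq_word_monom free_ring_monom_closed)

lemma fsub_eq_minus:
  "f \<in> carrier FRS \<Longrightarrow> g \<in> carrier FRS \<Longrightarrow> fsub f g = f \<ominus>\<^bsub>FRS\<^esub> g"
  by (simp add: fsub_def a_minus_def free_ring_minus free_ring_add)

lemma loc_relations_subset: "loc_relations R S \<subseteq> carrier FRS"
  unfolding loc_relations_def by (auto simp: fsub_eq_minus)

lemma ideal_loc_ideal: "ideal IS FRS"
  unfolding loc_ideal_def by (rule FRS.genideal_ideal[OF loc_relations_subset])

lemma ring_univ_loc: "ring U"
  unfolding univ_loc_def by (rule ideal.quotient_is_ring[OF ideal_loc_ideal])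

sublocale U: ring U by (rule ring_univ_loc)

sublocale rcos: ring_hom_ring FRS U "\<lambda>f. IS +>\<^bsub>FRS\<^esub> f"
  unfolding univ_loc_def by (rule ideal.rcos_ring_hom_ring[OF ideal_loc_ideal])

lemma rcos_eq_of_relation:
  assumes "f \<in> carrier FRS" "g \<in> carrier FRS" "fsub f g \<in> loc_relations R S"
  shows "IS +>\<^bsub>FRS\<^esub> f = IS +>\<^bsub>FRS\<^esub> g"
proof -
  have "f \<ominus>\<^bsub>FRS\<^esub> g \<in> IS"
    using assms FRS.genideal_self[OF loc_relations_subset] fsub_eq_minus
    by (auto simp: loc_ideal_def)
  then show ?thesis by (simp add: ideal.rcos_eq_iff[OF ideal_loc_ideal assms(1,2)])
qed

lemma loc_can_closed [simp]: "r \<in> carrier R \<Longrightarrow> lc r \<in> carrier U"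
  by (simp add: loc_can_def)

lemma loc_x_closed [simp]: "s \<in> S \<Longrightarrow> lx s \<in> carrier U"
  by (simp add: loc_x_def)

lemma loc_can_hom: "lc \<in> ring_hom R U"
proof (rule ring_hom_memI)
  fix a b assume ab: "a \<in> carrier R" "b \<in> carrier R"
  have "lc (a \<otimes>\<^bsub>R\<^esub> b) = IS +>\<^bsub>FRS\<^esub> (gen (Inl a) \<otimes>\<^bsub>FRS\<^esub> gen (Inl b))"
    unfolding loc_can_def by (rule rcos_eq_of_relation) (use ab in \<open>auto simp: loc_relations_def\<close>)
  then show "lc (a \<otimes>\<^bsub>R\<^esub> b) = lc a \<otimes>\<^bsub>U\<^esub> lc b"
    using ab by (simp add: loc_can_def)
  have "lc (a \<oplus>\<^bsub>R\<^esub> b) = IS +>\<^bsub>FRS\<^esub> (gen (Inl a) \<oplus>\<^bsub>FRS\<^esub> gen (Inl b))"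
    unfolding loc_can_def by (rule rcos_eq_of_relation) (use ab in \<open>auto simp: loc_relations_def\<close>)
  then show "lc (a \<oplus>\<^bsub>R\<^esub> b) = lc a \<oplus>\<^bsub>U\<^esub> lc b"
    using ab by (simp add: loc_can_def)
next
  have "lc \<one>\<^bsub>R\<^esub> = IS +>\<^bsub>FRS\<^esub> \<one>\<^bsub>FRS\<^esub>"
    unfolding loc_can_def by (rule rcos_eq_of_relation) (auto simp: loc_relations_def)
  then show "lc \<one>\<^bsub>R\<^esub> = \<one>\<^bsub>U\<^esub>" by simp
qed simp

sublocale loc_can: ring_hom_ring R U lc
  by (intro ring_hom_ringI2 R.ring_axioms U.ring_axioms loc_can_hom)

lemma loc_can_loc_x:
  assumes s: "s \<in> S"
  shows "lc s \<otimes>\<^bsub>U\<^esub> lx s = \<one>\<^bsub>U\<^esub>"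
proof -
  have "IS +>\<^bsub>FRS\<^esub> (gen (Inl s) \<otimes>\<^bsub>FRS\<^esub> gen (Inr s)) = IS +>\<^bsub>FRS\<^esub> \<one>\<^bsub>FRS\<^esub>"
    by (rule rcos_eq_of_relation) (use s in \<open>auto simp: loc_relations_def\<close>)
  then show ?thesis using s by (simp add: loc_can_def loc_x_def)
qed

lemma loc_x_loc_can:
  assumes s: "s \<in> S"
  shows "lx s \<otimes>\<^bsub>U\<^esub> lc s = \<one>\<^bsub>U\<^esub>"
proof -
  have "IS +>\<^bsub>FRS\<^esub> (gen (Inr s) \<otimes>\<^bsub>FRS\<^esub> gen (Inl s)) = IS +>\<^bsub>FRS\<^esub> \<one>\<^bsub>FRS\<^esub>"
    by (rule rcos_eq_of_relation) (use s in \<open>auto simp: loc_relations_def\<close>)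
  then show ?thesis using s by (simp add: loc_can_def loc_x_def)
qed

lemma loc_can_Units: "s \<in> S \<Longrightarrow> lc s \<in> Units U"
  using loc_can_loc_x loc_x_loc_can unfolding Units_def by force

lemma inv_loc_can: "s \<in> S \<Longrightarrow> inv\<^bsub>U\<^esub> (lc s) = lx s"
  using U.inv_unique'[of "lc s" "lx s"] loc_can_loc_x loc_x_loc_can by simp

end

definition loc_letter_val :: "('a \<Rightarrow> 'b) \<Rightarrow> ('b, 'm) ring_scheme \<Rightarrow> 'a + 'a \<Rightarrow> 'b" where
  "loc_letter_val f Q = case_sum f (\<lambda>s. inv\<^bsub>Q\<^esub> (f s))"

context univ_localization
begin

lemma loc_letter_val_closed:
  assumes "ring Q" "f \<in> ring_hom R Q" "\<forall>s\<in>S. f s \<in> Units Q"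
  shows "loc_letter_val f Q ` loc_letters R S \<subseteq> carrier Q"
  using assms by (auto simp: loc_letter_val_def loc_letters_def ring_hom_closed
      monoid.Units_inv_closed ring.is_monoid)

lemma eval_gen_Inl:
  assumes "ring Q" "f \<in> ring_hom R Q" "\<forall>s\<in>S. f s \<in> Units Q" "r \<in> carrier R"
  shows "free_ring_eval Q (loc_letter_val f Q) (gen (Inl r)) = f r"
  using ring.free_ring_eval_gen[OF assms(1) loc_letter_val_closed[OF assms(1-3)]] assms(4)
  by (simp add: loc_letter_val_def)

lemma eval_gen_Inr:
  assumes "ring Q" "f \<in> ring_hom R Q" "\<forall>s\<in>S. f s \<in> Units Q" "s \<in> S"
  shows "free_ring_eval Q (loc_letter_val f Q) (gen (Inr s)) = inv\<^bsub>Q\<^esub> (f s)"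
  using ring.free_ring_eval_gen[OF assms(1) loc_letter_val_closed[OF assms(1-3)]] assms(4)
  by (simp add: loc_letter_val_def)

lemma loc_relations_in_kernel:
  assumes Q: "ring Q" and f: "f \<in> ring_hom R Q" and units: "\<forall>s\<in>S. f s \<in> Units Q"
  shows "loc_relations R S \<subseteq> a_kernel FRS Q (free_ring_eval Q (loc_letter_val f Q))"
proof -
  interpret Q: ring Q by (rule Q)
  interpret f: ring_hom_ring R Q f by (intro ring_hom_ringI2 R.ring_axioms Q f)
  note e = loc_letter_val_closed[OF Q f units]
  define ev where "ev = free_ring_eval Q (loc_letter_val f Q)"
  interpret ev: ring_hom_ring FRS Q ev
    unfolding ev_def by (intro ring_hom_ringI2 FRS.ring_axioms Q Q.free_ring_eval_hom[OF e])
  note ev_Inl = eval_gen_Inl[OF Q f units, folded ev_def]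
  note ev_Inr = eval_gen_Inr[OF Q f units, folded ev_def]
  have fsub_in_kernel: "fsub g h \<in> a_kernel FRS Q ev"
    if "g \<in> carrier FRS" "h \<in> carrier FRS" "ev g = ev h" for g h
  proof -
    have "ev (fsub g h) = ev g \<oplus>\<^bsub>Q\<^esub> \<ominus>\<^bsub>Q\<^esub> ev h"
      using that by (simp add: fsub_eq_minus a_minus_def)
    also have "\<dots> = \<zero>\<^bsub>Q\<^esub>"
      using that by (simp add: Q.r_neg)
    finally show ?thesis
      using that FRS.minus_closed unfolding a_kernel_def' by (simp add: fsub_eq_minus)
  qed
  show ?thesis
    unfolding ev_def[symmetric]
  proof
    fix z assume "z \<in> loc_relations R S"
    then consider
      a b where "a \<in> carrier R" "b \<in> carrier R"
        "z = fsub (gen (Inl (a \<oplus>\<^bsub>R\<^esub> b))) (gen (Inl a) \<oplus>\<^bsub>FRS\<^esub> gen (Inl b))"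
    | a b where "a \<in> carrier R" "b \<in> carrier R"
        "z = fsub (gen (Inl (a \<otimes>\<^bsub>R\<^esub> b))) (gen (Inl a) \<otimes>\<^bsub>FRS\<^esub> gen (Inl b))"
    | "z = fsub (gen (Inl \<one>\<^bsub>R\<^esub>)) \<one>\<^bsub>FRS\<^esub>"
    | s where "s \<in> S" "z = fsub (gen (Inl s) \<otimes>\<^bsub>FRS\<^esub> gen (Inr s)) \<one>\<^bsub>FRS\<^esub>"
    | s where "s \<in> S" "z = fsub (gen (Inr s) \<otimes>\<^bsub>FRS\<^esub> gen (Inl s)) \<one>\<^bsub>FRS\<^esub>"
      unfolding loc_relations_def by blast
    then show "z \<in> a_kernel FRS Q ev"
      by cases (simp_all add: fsub_in_kernel ev_Inl ev_Inr units)
  qed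
qed

lemma univ_loc_universal:
  assumes Q: "ring Q" and f: "f \<in> ring_hom R Q" and units: "\<forall>s\<in>S. f s \<in> Units Q"
  shows "\<exists>h. h \<in> ring_hom U Q \<and> (\<forall>r\<in>carrier R. h (lc r) = f r)
    \<and> (\<forall>s\<in>S. h (lx s) = inv\<^bsub>Q\<^esub> (f s))"
proof -
  interpret Q: ring Q by (rule Q)
  note e = loc_letter_val_closed[OF Q f units]
  define ev where "ev = free_ring_eval Q (loc_letter_val f Q)"
  have ev: "ev \<in> ring_hom FRS Q"
    unfolding ev_def by (rule Q.free_ring_eval_hom[OF e])
  have IS_kernel: "IS \<subseteq> a_kernel FRS Q ev"
    unfolding loc_ideal_def ev_def
    by (rule FRS.genideal_minimal[OF ring_hom_ring.kernel_is_ideal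
          loc_relations_in_kernel[OF Q f units]])
       (intro ring_hom_ringI2 FRS.ring_axioms Q Q.free_ring_eval_hom[OF e])
  note lift = quot_lift_rcos[OF FRS.ring_axioms Q ideal_loc_ideal ev IS_kernel]
  have "quot_lift ev \<in> ring_hom U Q"
    unfolding univ_loc_def by (rule quot_lift_hom[OF FRS.ring_axioms Q ideal_loc_ideal ev IS_kernel])
  moreover have "\<forall>r\<in>carrier R. quot_lift ev (lc r) = f r" "\<forall>s\<in>S. quot_lift ev (lx s) = inv\<^bsub>Q\<^esub> (f s)"
    by (simp_all add: loc_can_def loc_x_def lift eval_gen_Inl[OF Q f units, folded ev_def]
        eval_gen_Inr[OF Q f units, folded ev_def])
  ultimately show ?thesis by blast
qed

end

section \<open>Right fractions in \<open>R\<langle>S\<^sup>-\<^sup>1\<rangle>\<close> for a right Ore set\<close>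

locale ore_univ_localization = univ_localization +
  assumes right_ore: "right_ore_set R S"
begin

lemma one_in_S: "\<one>\<^bsub>R\<^esub> \<in> S"
  using right_ore by (simp add: right_ore_set_def mult_set_def)

lemma mult_in_S: "s \<in> S \<Longrightarrow> t \<in> S \<Longrightarrow> s \<otimes>\<^bsub>R\<^esub> t \<in> S"
  using right_ore by (simp add: right_ore_set_def mult_set_def)

lemma ore_condition:
  "r \<in> carrier R \<Longrightarrow> s \<in> S \<Longrightarrow> \<exists>t\<in>S. \<exists>r'\<in>carrier R. r \<otimes>\<^bsub>R\<^esub> t = s \<otimes>\<^bsub>R\<^esub> r'"
  using right_ore by (simp add: right_ore_set_def)

lemma loc_x_unique:
  assumes s: "s \<in> S" and y: "y \<in> carrier U" and inv: "lc s \<otimes>\<^bsub>U\<^esub> y = \<one>\<^bsub>U\<^esub>"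
  shows "y = lx s"
proof -
  have "y = (lx s \<otimes>\<^bsub>U\<^esub> lc s) \<otimes>\<^bsub>U\<^esub> y" using loc_x_loc_can[OF s] y by simp
  also have "\<dots> = lx s" using s y inv by (simp add: U.m_assoc)
  finally show ?thesis .
qed

lemma loc_x_one: "lx \<one>\<^bsub>R\<^esub> = \<one>\<^bsub>U\<^esub>"
  using loc_x_unique[OF one_in_S, of "\<one>\<^bsub>U\<^esub>"] by simp

lemma loc_x_mult:
  assumes s: "s \<in> S" and t: "t \<in> S"
  shows "lx t \<otimes>\<^bsub>U\<^esub> lx s = lx (s \<otimes>\<^bsub>R\<^esub> t)"
proof (rule loc_x_unique[OF mult_in_S[OF s t]])
  have "lc (s \<otimes>\<^bsub>R\<^esub> t) \<otimes>\<^bsub>U\<^esub> (lx t \<otimes>\<^bsub>U\<^esub> lx s) = lc s \<otimes>\<^bsub>U\<^esub> ((lc t \<otimes>\<^bsub>U\<^esub> lx t) \<otimes>\<^bsub>U\<^esub> lx s)"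
    using s t by (simp add: U.m_assoc)
  then show "lc (s \<otimes>\<^bsub>R\<^esub> t) \<otimes>\<^bsub>U\<^esub> (lx t \<otimes>\<^bsub>U\<^esub> lx s) = \<one>\<^bsub>U\<^esub>"
    using s t by (simp add: loc_can_loc_x)
qed (use s t in simp)

lemma loc_x_common_denominator:
  assumes s1: "s1 \<in> S" and s2: "s2 \<in> S"
  obtains m t r where "m \<in> S" "t \<in> carrier R" "r \<in> carrier R"
    "lx s1 = lc t \<otimes>\<^bsub>U\<^esub> lx m" "lx s2 = lc r \<otimes>\<^bsub>U\<^esub> lx m"
proof -
  obtain t r where t: "t \<in> S" and r: "r \<in> carrier R" and eq: "s1 \<otimes>\<^bsub>R\<^esub> t = s2 \<otimes>\<^bsub>R\<^esub> r"
    using ore_condition[OF _ s2, of s1] s1 by auto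
  define m where "m = s1 \<otimes>\<^bsub>R\<^esub> t"
  have m: "m \<in> S" unfolding m_def using mult_in_S s1 t by simp
  have "lx s1 = lc t \<otimes>\<^bsub>U\<^esub> lx m"
  proof (rule loc_x_unique[OF s1, symmetric])
    show "lc s1 \<otimes>\<^bsub>U\<^esub> (lc t \<otimes>\<^bsub>U\<^esub> lx m) = \<one>\<^bsub>U\<^esub>"
      using s1 t m loc_can_loc_x[OF m] by (simp add: m_def U.m_assoc)
  qed (use t m in simp)
  moreover have "lx s2 = lc r \<otimes>\<^bsub>U\<^esub> lx m"
  proof (rule loc_x_unique[OF s2, symmetric])
    show "lc s2 \<otimes>\<^bsub>U\<^esub> (lc r \<otimes>\<^bsub>U\<^esub> lx m) = \<one>\<^bsub>U\<^esub>"
      using s2 r m loc_can_loc_x[OF m] by (simp add: m_def eq U.m_assoc)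
  qed (use r m in simp)
  ultimately show ?thesis using that[of m t r] m t r by simp
qed

lemma loc_x_loc_can_swap:
  assumes s: "s \<in> S" and r: "r \<in> carrier R"
  obtains t r' where "t \<in> S" "r' \<in> carrier R" "lx s \<otimes>\<^bsub>U\<^esub> lc r = lc r' \<otimes>\<^bsub>U\<^esub> lx t"
proof -
  obtain t r' where t: "t \<in> S" and r': "r' \<in> carrier R" and eq: "r \<otimes>\<^bsub>R\<^esub> t = s \<otimes>\<^bsub>R\<^esub> r'"
    using ore_condition[OF r s] by blast
  have "lx s \<otimes>\<^bsub>U\<^esub> lc r = lx s \<otimes>\<^bsub>U\<^esub> lc r \<otimes>\<^bsub>U\<^esub> (lc t \<otimes>\<^bsub>U\<^esub> lx t)"
    using s r t by (simp add: loc_can_loc_x)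
  also have "\<dots> = lx s \<otimes>\<^bsub>U\<^esub> lc (s \<otimes>\<^bsub>R\<^esub> r') \<otimes>\<^bsub>U\<^esub> lx t"
    using s r t by (simp add: U.m_assoc flip: eq)
  also have "\<dots> = (lx s \<otimes>\<^bsub>U\<^esub> lc s) \<otimes>\<^bsub>U\<^esub> lc r' \<otimes>\<^bsub>U\<^esub> lx t"
    using s r' t by (simp add: U.m_assoc)
  also have "\<dots> = lc r' \<otimes>\<^bsub>U\<^esub> lx t"
    using s r' t by (simp add: loc_x_loc_can)
  finally show ?thesis using that t r' by blast
qed

definition right_fractions :: "(('a + 'a) list \<Rightarrow> int) set set" where
  "right_fractions = {lc r \<otimes>\<^bsub>U\<^esub> lx s | r s. r \<in> carrier R \<and> s \<in> S}"

lemma right_fractionsI: "r \<in> carrier R \<Longrightarrow> s \<in> S \<Longrightarrow> lc r \<otimes>\<^bsub>U\<^esub> lx s \<in> right_fractions"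
  unfolding right_fractions_def by blast

lemma right_fractionsE:
  assumes "q \<in> right_fractions"
  obtains r s where "r \<in> carrier R" "s \<in> S" "q = lc r \<otimes>\<^bsub>U\<^esub> lx s"
  using assms unfolding right_fractions_def by blast

lemma loc_can_in_right_fractions: "r \<in> carrier R \<Longrightarrow> lc r \<in> right_fractions"
  using right_fractionsI[OF _ one_in_S, of r] by (simp add: loc_x_one)

lemma loc_x_in_right_fractions: "s \<in> S \<Longrightarrow> lx s \<in> right_fractions"
  using right_fractionsI[OF R.one_closed, of s] by simp

lemma right_fractions_uminus:
  assumes "q \<in> right_fractions"
  shows "\<ominus>\<^bsub>U\<^esub> q \<in> right_fractions"
proof -
  obtain r s where "r \<in> carrier R" "s \<in> S" "q = lc r \<otimes>\<^bsub>U\<^esub> lx s"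
    using assms by (rule right_fractionsE)
  then have "\<ominus>\<^bsub>U\<^esub> q = lc (\<ominus>\<^bsub>R\<^esub> r) \<otimes>\<^bsub>U\<^esub> lx s \<and> \<ominus>\<^bsub>R\<^esub> r \<in> carrier R \<and> s \<in> S"
    by (simp add: U.l_minus)
  then show ?thesis using right_fractionsI by metis
qed

lemma right_fractions_add:
  assumes "q1 \<in> right_fractions" "q2 \<in> right_fractions"
  shows "q1 \<oplus>\<^bsub>U\<^esub> q2 \<in> right_fractions"
proof -
  obtain r1 s1 where r1: "r1 \<in> carrier R" and s1: "s1 \<in> S" and q1: "q1 = lc r1 \<otimes>\<^bsub>U\<^esub> lx s1"
    using assms(1) by (rule right_fractionsE)
  obtain r2 s2 where r2: "r2 \<in> carrier R" and s2: "s2 \<in> S" and q2: "q2 = lc r2 \<otimes>\<^bsub>U\<^esub> lx s2"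
    using assms(2) by (rule right_fractionsE)
  obtain m t r where m: "m \<in> S" and t: "t \<in> carrier R" and r: "r \<in> carrier R"
    and e1: "lx s1 = lc t \<otimes>\<^bsub>U\<^esub> lx m" and e2: "lx s2 = lc r \<otimes>\<^bsub>U\<^esub> lx m"
    using loc_x_common_denominator[OF s1 s2] by blast
  have "q1 \<oplus>\<^bsub>U\<^esub> q2 = lc (r1 \<otimes>\<^bsub>R\<^esub> t \<oplus>\<^bsub>R\<^esub> r2 \<otimes>\<^bsub>R\<^esub> r) \<otimes>\<^bsub>U\<^esub> lx m"
    using r1 r2 t r m by (simp add: q1 q2 e1 e2 U.m_assoc U.l_distr)
  then show ?thesis using right_fractionsI[of "r1 \<otimes>\<^bsub>R\<^esub> t \<oplus>\<^bsub>R\<^esub> r2 \<otimes>\<^bsub>R\<^esub> r" m] r1 r2 t r m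
    by simp
qed

lemma right_fractions_mult:
  assumes "q1 \<in> right_fractions" "q2 \<in> right_fractions"
  shows "q1 \<otimes>\<^bsub>U\<^esub> q2 \<in> right_fractions"
proof -
  obtain r1 s1 where r1: "r1 \<in> carrier R" and s1: "s1 \<in> S" and q1: "q1 = lc r1 \<otimes>\<^bsub>U\<^esub> lx s1"
    using assms(1) by (rule right_fractionsE)
  obtain r2 s2 where r2: "r2 \<in> carrier R" and s2: "s2 \<in> S" and q2: "q2 = lc r2 \<otimes>\<^bsub>U\<^esub> lx s2"
    using assms(2) by (rule right_fractionsE)
  obtain t r where t: "t \<in> S" and r: "r \<in> carrier R"
    and swap: "lx s1 \<otimes>\<^bsub>U\<^esub> lc r2 = lc r \<otimes>\<^bsub>U\<^esub> lx t"
    using loc_x_loc_can_swap[OF s1 r2] by blast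
  have "q1 \<otimes>\<^bsub>U\<^esub> q2 = lc r1 \<otimes>\<^bsub>U\<^esub> (lx s1 \<otimes>\<^bsub>U\<^esub> lc r2) \<otimes>\<^bsub>U\<^esub> lx s2"
    using r1 r2 s1 s2 by (simp add: q1 q2 U.m_assoc)
  also have "\<dots> = lc (r1 \<otimes>\<^bsub>R\<^esub> r) \<otimes>\<^bsub>U\<^esub> lx (s2 \<otimes>\<^bsub>R\<^esub> t)"
    using r1 r t s2 by (simp add: swap U.m_assoc flip: loc_x_mult)
  finally show ?thesis
    using right_fractionsI[of "r1 \<otimes>\<^bsub>R\<^esub> r" "s2 \<otimes>\<^bsub>R\<^esub> t"] mult_in_S s2 t r1 r by simp
qed

lemma rcos_monom_Nil_in_right_fractions: "IS +>\<^bsub>FRS\<^esub> word_monom k [] \<in> right_fractions"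
proof (induction k rule: int_induct[where k = 0])
  case base
  have "word_monom 0 [] = \<zero>\<^bsub>FRS\<^esub>" by (simp add: free_ring_zero word_monom_def fun_eq_iff)
  then show ?case using loc_can_in_right_fractions[OF R.zero_closed] by simp
next
  case (step1 i)
  have "word_monom (i + 1) [] = word_monom i [] \<oplus>\<^bsub>FRS\<^esub> \<one>\<^bsub>FRS\<^esub>"
    by (simp add: free_ring_add free_ring_one word_monom_def fun_eq_iff)
  then show ?case
    using step1 right_fractions_add loc_can_in_right_fractions[OF R.one_closed]
    by (simp add: free_ring_monom_closed)
next
  case (step2 i)
  have "\<ominus>\<^bsub>FRS\<^esub> \<one>\<^bsub>FRS\<^esub> = (\<lambda>w. - word_monom 1 [] w)"
    using free_ring_minus[OF FRS.one_closed] by (simp add: free_ring_one)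
  then have "word_monom (i - 1) [] = word_monom i [] \<oplus>\<^bsub>FRS\<^esub> \<ominus>\<^bsub>FRS\<^esub> \<one>\<^bsub>FRS\<^esub>"
    by (simp add: free_ring_add word_monom_def fun_eq_iff)
  then show ?case
    using step2 right_fractions_add right_fractions_uminus loc_can_in_right_fractions[OF R.one_closed]
    by (simp add: free_ring_monom_closed)
qed

lemma rcos_monom_in_right_fractions:
  "set u \<subseteq> loc_letters R S \<Longrightarrow> IS +>\<^bsub>FRS\<^esub> word_monom k u \<in> right_fractions"
proof (induction u)
  case (Cons x u)
  have "word_monom k (x # u) = gen x \<otimes>\<^bsub>FRS\<^esub> word_monom k u"
    by (simp add: free_ring_mult word_conv_gen_monom)
  moreover have "IS +>\<^bsub>FRS\<^esub> gen x \<in> right_fractions"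
    using Cons.prems loc_can_in_right_fractions loc_x_in_right_fractions
    by (auto simp: loc_letters_def loc_can_def loc_x_def)
  ultimately show ?case
    using Cons right_fractions_mult
    by (simp add: gen_eq_word_monom free_ring_monom_closed)
qed (rule rcos_monom_Nil_in_right_fractions)

lemma rcos_finsum_in_right_fractions:
  assumes "finite A" "g \<in> A \<rightarrow> carrier FRS" "\<And>a. a \<in> A \<Longrightarrow> IS +>\<^bsub>FRS\<^esub> g a \<in> right_fractions"
  shows "IS +>\<^bsub>FRS\<^esub> finsum FRS g A \<in> right_fractions"
  using assms
proof (induction A rule: finite_induct)
  case empty
  then show ?case using loc_can_in_right_fractions[OF R.zero_closed] by simp
next
  case (insert a A)
  then show ?case by (simp add: FRS.finsum_insert FRS.finsum_closed right_fractions_add)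
qed

lemma univ_loc_right_fraction:
  assumes "q \<in> carrier U"
  shows "\<exists>r\<in>carrier R. \<exists>s\<in>S. q = lc r \<otimes>\<^bsub>U\<^esub> lx s"
proof -
  obtain f where f: "f \<in> carrier FRS" and q: "q = IS +>\<^bsub>FRS\<^esub> f"
    using assms unfolding univ_loc_def by (rule FactRing_carrierE)
  have letters: "\<And>w. w \<in> word_supp f \<Longrightarrow> set w \<subseteq> loc_letters R S"
    using free_ring_carrierD(2)[OF f] by (auto simp: word_supp_def)
  have "IS +>\<^bsub>FRS\<^esub> finsum FRS (\<lambda>u. word_monom (f u) u) (word_supp f) \<in> right_fractions"
    by (rule rcos_finsum_in_right_fractions[OF free_ring_carrierD(1)[OF f]])
       (use letters in \<open>auto intro: free_ring_monom_closed rcos_monom_in_right_fractions\<close>)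
  then show ?thesis
    using q free_ring_monom_decomp[OF f] unfolding right_fractions_def by auto
qed

end

section \<open>Right fractions for a regular right Ore set\<close>

locale regular_right_ore = ring +
  fixes T
  assumes T_subset: "T \<subseteq> carrier R" and one_in_T: "\<one> \<in> T"
    and mult_in_T: "\<lbrakk>s \<in> T; t \<in> T\<rbrakk> \<Longrightarrow> s \<otimes> t \<in> T"
    and ore: "\<lbrakk>r \<in> carrier R; s \<in> T\<rbrakk> \<Longrightarrow> \<exists>t\<in>T. \<exists>r'\<in>carrier R. r \<otimes> t = s \<otimes> r'"
    and left_regular: "\<lbrakk>s \<in> T; x \<in> carrier R; s \<otimes> x = \<zero>\<rbrakk> \<Longrightarrow> x = \<zero>"
    and right_regular: "\<lbrakk>s \<in> T; x \<in> carrier R; x \<otimes> s = \<zero>\<rbrakk> \<Longrightarrow> x = \<zero>"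
begin

lemma T_carrier [simp]: "s \<in> T \<Longrightarrow> s \<in> carrier R"
  using T_subset by blast

lemma T_left_cancel:
  assumes s: "s \<in> T" and x: "x \<in> carrier R" and y: "y \<in> carrier R" and e: "s \<otimes> x = s \<otimes> y"
  shows "x = y"
proof -
  have "s \<otimes> (x \<ominus> y) = s \<otimes> x \<ominus> s \<otimes> y"
    using s x y by (simp add: a_minus_def r_distr r_minus)
  also have "\<dots> = \<zero>" using e s y by simp
  finally have "x \<ominus> y = \<zero>" using left_regular[OF s] x y by simp
  then show ?thesis using x y by simp
qed

lemma T_right_cancel:
  assumes s: "s \<in> T" and x: "x \<in> carrier R" and y: "y \<in> carrier R" and e: "x \<otimes> s = y \<otimes> s"
  shows "x = y"
proof -
  have "(x \<ominus> y) \<otimes> s = x \<otimes> s \<ominus> y \<otimes> s"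
    using s x y by (simp add: a_minus_def l_distr l_minus)
  also have "\<dots> = \<zero>" using e s y by simp
  finally have "x \<ominus> y = \<zero>" using right_regular[OF s] x y by simp
  then show ?thesis using x y by simp
qed

lemma common_right_multiple:
  assumes s: "s \<in> T" and t: "t \<in> T"
  shows "\<exists>c\<in>carrier R. \<exists>d\<in>carrier R. s \<otimes> c = t \<otimes> d \<and> s \<otimes> c \<in> T"
proof -
  obtain u r' where u: "u \<in> T" and r': "r' \<in> carrier R" and e: "s \<otimes> u = t \<otimes> r'"
    using ore[OF T_carrier[OF s] t] by blast
  then show ?thesis using mult_in_T[OF s u] by (intro bexI[of _ u] bexI[of _ r']) auto
qed

text \<open>\<open>frac_rel a s b t\<close> says \<open>a s\<^sup>-\<^sup>1 = b t\<^sup>-\<^sup>1\<close>; the fraction \<open>a s\<^sup>-\<^sup>1\<close> is \<open>rfrac a s\<close>,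
  its equivalence class.\<close>
definition frac_rel :: "'a \<Rightarrow> 'a \<Rightarrow> 'a \<Rightarrow> 'a \<Rightarrow> bool" where
  "frac_rel a s b t \<longleftrightarrow> a \<in> carrier R \<and> s \<in> T \<and> b \<in> carrier R \<and> t \<in> T \<and>
     (\<exists>c\<in>carrier R. \<exists>d\<in>carrier R. s \<otimes> c = t \<otimes> d \<and> s \<otimes> c \<in> T \<and> a \<otimes> c = b \<otimes> d)"

text \<open>Thanks to regularity the defining equation of \<open>frac_rel\<close> holds for every common
  right multiple of the denominators, not only for the chosen one.\<close>
lemma frac_rel_common_multiple:
  assumes r: "frac_rel a s b t" and c: "c \<in> carrier R" and d: "d \<in> carrier R"
    and e: "s \<otimes> c = t \<otimes> d" and m: "s \<otimes> c \<in> T"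
  shows "a \<otimes> c = b \<otimes> d"
proof -
  obtain c0 d0 where c0: "c0 \<in> carrier R" and d0: "d0 \<in> carrier R" and e0: "s \<otimes> c0 = t \<otimes> d0"
    and m0: "s \<otimes> c0 \<in> T" and a0: "a \<otimes> c0 = b \<otimes> d0"
    using r unfolding frac_rel_def by blast
  have a: "a \<in> carrier R" and s: "s \<in> T" and b: "b \<in> carrier R" and t: "t \<in> T"
    using r unfolding frac_rel_def by auto
  obtain v w where v: "v \<in> T" and w: "w \<in> carrier R" and vw: "(s \<otimes> c) \<otimes> v = (s \<otimes> c0) \<otimes> w"
    using ore[OF T_carrier[OF m] m0] by blast
  have vc: "v \<in> carrier R" using v by simp
  have cv: "c \<otimes> v = c0 \<otimes> w"
    by (rule T_left_cancel[OF s]) (use vw s c c0 vc w in \<open>simp_all add: m_assoc\<close>)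
  have dv: "d \<otimes> v = d0 \<otimes> w"
  proof (rule T_left_cancel[OF t])
    show "t \<otimes> (d \<otimes> v) = t \<otimes> (d0 \<otimes> w)"
      using vw s c c0 vc w t d d0 e e0 by (simp add: m_assoc[symmetric])
  qed (use d d0 vc w in auto)
  have eqv: "(a \<otimes> c) \<otimes> v = (b \<otimes> d) \<otimes> v"
  proof -
    have "(a \<otimes> c) \<otimes> v = a \<otimes> (c0 \<otimes> w)" using a c vc cv by (simp add: m_assoc)
    also have "\<dots> = (b \<otimes> d0) \<otimes> w" using a c0 w a0 by (simp add: m_assoc[symmetric])
    also have "\<dots> = b \<otimes> (d \<otimes> v)" using b d0 w dv by (simp add: m_assoc)
    also have "\<dots> = (b \<otimes> d) \<otimes> v" using b d vc by (simp add: m_assoc)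
    finally show ?thesis .
  qed
  show ?thesis by (rule T_right_cancel[OF v _ _ eqv]) (use a b c d in auto)
qed

lemma frac_rel_refl: "a \<in> carrier R \<Longrightarrow> s \<in> T \<Longrightarrow> frac_rel a s a s"
  unfolding frac_rel_def by (intro conjI bexI[of _ \<one>]) auto

lemma frac_rel_sym: "frac_rel a s b t \<Longrightarrow> frac_rel b t a s"
  unfolding frac_rel_def by (metis (no_types, lifting))

lemma frac_rel_trans:
  assumes r1: "frac_rel a s b t" and r2: "frac_rel b t e p"
  shows "frac_rel a s e p"
proof -
  have a: "a \<in> carrier R" and s: "s \<in> T" and b: "b \<in> carrier R" and t: "t \<in> T"
    and e: "e \<in> carrier R" and p: "p \<in> T"
    using r1 r2 unfolding frac_rel_def by auto
  obtain c d where c: "c \<in> carrier R" and d: "d \<in> carrier R" and cd: "s \<otimes> c = p \<otimes> d"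
    and m: "s \<otimes> c \<in> T"
    using common_right_multiple[OF s p] by blast
  obtain v w where v: "v \<in> T" and w: "w \<in> carrier R" and vw: "(s \<otimes> c) \<otimes> v = t \<otimes> w"
    using ore[OF T_carrier[OF m] t] by blast
  have vc: "v \<in> carrier R" using v by simp
  have m2: "s \<otimes> (c \<otimes> v) \<in> T" using mult_in_T[OF m v] s c vc by (simp add: m_assoc)
  have h1: "a \<otimes> (c \<otimes> v) = b \<otimes> w"
    by (rule frac_rel_common_multiple[OF r1]) (use c vc w vw m2 s in \<open>simp_all add: m_assoc\<close>)
  have h2: "b \<otimes> w = e \<otimes> (d \<otimes> v)"
  proof (rule frac_rel_common_multiple[OF r2])
    show "t \<otimes> w = p \<otimes> (d \<otimes> v)" using vw cd s c vc p d by (simp add: m_assoc[symmetric])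
    show "t \<otimes> w \<in> T" using vw mult_in_T[OF m v] by simp
  qed (use w d vc in auto)
  have eqv: "(a \<otimes> c) \<otimes> v = (e \<otimes> d) \<otimes> v"
    using h1 h2 a c vc e d by (simp add: m_assoc)
  have "a \<otimes> c = e \<otimes> d" by (rule T_right_cancel[OF v _ _ eqv]) (use a c e d in auto)
  then show ?thesis unfolding frac_rel_def using a s e p c d cd m by blast
qed

lemma frac_rel_expand:
  assumes a: "a \<in> carrier R" and s: "s \<in> T" and c: "c \<in> carrier R" and m: "s \<otimes> c \<in> T"
  shows "frac_rel a s (a \<otimes> c) (s \<otimes> c)"
  unfolding frac_rel_def using assms by (intro conjI bexI[of _ c] bexI[of _ \<one>]) auto

definition rfrac :: "'a \<Rightarrow> 'a \<Rightarrow> ('a \<times> 'a) set" where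
  "rfrac a s = {(b, t). frac_rel a s b t}"

lemma rfrac_eq_iff:
  assumes "a \<in> carrier R" "s \<in> T" "b \<in> carrier R" "t \<in> T"
  shows "rfrac a s = rfrac b t \<longleftrightarrow> frac_rel a s b t"
proof
  assume "rfrac a s = rfrac b t"
  then have "(b, t) \<in> rfrac a s" using frac_rel_refl[of b t] assms by (simp add: rfrac_def)
  then show "frac_rel a s b t" by (simp add: rfrac_def)
next
  assume r: "frac_rel a s b t"
  show "rfrac a s = rfrac b t"
    unfolding rfrac_def using r frac_rel_sym frac_rel_trans by blast
qed

lemma rfrac_eqI: "frac_rel a s b t \<Longrightarrow> rfrac a s = rfrac b t"
  using rfrac_eq_iff unfolding frac_rel_def by blast

lemma rfrac_expand:
  assumes "a \<in> carrier R" "s \<in> T" "c \<in> carrier R" "s \<otimes> c \<in> T"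
  shows "rfrac a s = rfrac (a \<otimes> c) (s \<otimes> c)"
  by (rule rfrac_eqI[OF frac_rel_expand[OF assms]])

definition fracs :: "('a \<times> 'a) set set" where
  "fracs = {rfrac a s | a s. a \<in> carrier R \<and> s \<in> T}"

lemma rfrac_in_fracs [simp]: "a \<in> carrier R \<Longrightarrow> s \<in> T \<Longrightarrow> rfrac a s \<in> fracs"
  unfolding fracs_def by blast

lemma fracsE:
  assumes "F \<in> fracs"
  obtains a s where "a \<in> carrier R" "s \<in> T" "F = rfrac a s"
  using assms unfolding fracs_def by blast

lemma fracs_common_denominator:
  assumes "F \<in> fracs" "G \<in> fracs"
  shows "\<exists>x y m. x \<in> carrier R \<and> y \<in> carrier R \<and> m \<in> T \<and> F = rfrac x m \<and> G = rfrac y m"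
proof -
  obtain a s where a: "a \<in> carrier R" and s: "s \<in> T" and X: "F = rfrac a s" using assms(1) by (rule fracsE)
  obtain b t where b: "b \<in> carrier R" and t: "t \<in> T" and Y: "G = rfrac b t" using assms(2) by (rule fracsE)
  obtain c d where c: "c \<in> carrier R" and d: "d \<in> carrier R" and cd: "s \<otimes> c = t \<otimes> d"
    and m: "s \<otimes> c \<in> T" using common_right_multiple[OF s t] by blast
  have "F = rfrac (a \<otimes> c) (s \<otimes> c)" using rfrac_expand[OF a s c m] X by simp
  moreover have "G = rfrac (b \<otimes> d) (s \<otimes> c)" using rfrac_expand[OF b t d] cd m Y by simp
  ultimately show ?thesis using a b c d m by blast
qed

lemma fracs_common_denominator3:
  assumes "F \<in> fracs" "G \<in> fracs" "H \<in> fracs"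
  shows "\<exists>x y z m. x \<in> carrier R \<and> y \<in> carrier R \<and> z \<in> carrier R \<and> m \<in> T \<and>
     F = rfrac x m \<and> G = rfrac y m \<and> H = rfrac z m"
proof -
  obtain x y m where x: "x \<in> carrier R" and y: "y \<in> carrier R" and m: "m \<in> T"
    and X: "F = rfrac x m" and Y: "G = rfrac y m" using fracs_common_denominator[OF assms(1,2)] by blast
  obtain e p where e: "e \<in> carrier R" and p: "p \<in> T" and Z: "H = rfrac e p" using assms(3) by (rule fracsE)
  obtain c d where c: "c \<in> carrier R" and d: "d \<in> carrier R" and cd: "m \<otimes> c = p \<otimes> d"
    and mc: "m \<otimes> c \<in> T" using common_right_multiple[OF m p] by blast
  have "F = rfrac (x \<otimes> c) (m \<otimes> c)" using rfrac_expand[OF x m c mc] X by simp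
  moreover have "G = rfrac (y \<otimes> c) (m \<otimes> c)" using rfrac_expand[OF y m c mc] Y by simp
  moreover have "H = rfrac (e \<otimes> d) (m \<otimes> c)" using rfrac_expand[OF e p d] cd mc Z by simp
  moreover have "x \<otimes> c \<in> carrier R" "y \<otimes> c \<in> carrier R" "e \<otimes> d \<in> carrier R"
    using x y e c d by auto
  ultimately show ?thesis using mc by blast
qed

definition frac_add :: "('a \<times> 'a) set \<Rightarrow> ('a \<times> 'a) set \<Rightarrow> ('a \<times> 'a) set" where
  "frac_add F G = (SOME H. \<exists>x y m. x \<in> carrier R \<and> y \<in> carrier R \<and> m \<in> T \<and>
      F = rfrac x m \<and> G = rfrac y m \<and> H = rfrac (x \<oplus> y) m)"

lemma frac_add_well_defined:
  assumes x: "x \<in> carrier R" and y: "y \<in> carrier R" and m: "m \<in> T"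
    and x': "x' \<in> carrier R" and y': "y' \<in> carrier R" and m': "m' \<in> T"
    and ex: "rfrac x m = rfrac x' m'" and ey: "rfrac y m = rfrac y' m'"
  shows "rfrac (x \<oplus> y) m = rfrac (x' \<oplus> y') m'"
proof -
  obtain c d where c: "c \<in> carrier R" and d: "d \<in> carrier R" and cd: "m \<otimes> c = m' \<otimes> d"
    and mc: "m \<otimes> c \<in> T" using common_right_multiple[OF m m'] by blast
  have rx: "frac_rel x m x' m'" using ex rfrac_eq_iff x m x' m' by blast
  have ry: "frac_rel y m y' m'" using ey rfrac_eq_iff y m y' m' by blast
  have "x \<otimes> c = x' \<otimes> d" by (rule frac_rel_common_multiple[OF rx c d cd mc])
  moreover have "y \<otimes> c = y' \<otimes> d" by (rule frac_rel_common_multiple[OF ry c d cd mc])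
  ultimately have "(x \<oplus> y) \<otimes> c = (x' \<oplus> y') \<otimes> d" using x y x' y' c d by (simp add: l_distr)
  then show ?thesis
    by (intro rfrac_eqI) (unfold frac_rel_def, use x y x' y' m m' c d cd mc in blast)
qed

lemma frac_add_rfrac:
  assumes x: "x \<in> carrier R" and y: "y \<in> carrier R" and m: "m \<in> T"
  shows "frac_add (rfrac x m) (rfrac y m) = rfrac (x \<oplus> y) m"
  unfolding frac_add_def
proof (rule someI2)
  show "\<exists>x' y' m'. x' \<in> carrier R \<and> y' \<in> carrier R \<and> m' \<in> T \<and> rfrac x m = rfrac x' m' \<and>
      rfrac y m = rfrac y' m' \<and> rfrac (x \<oplus> y) m = rfrac (x' \<oplus> y') m'"
    using assms by blast
next
  fix H assume "\<exists>x' y' m'. x' \<in> carrier R \<and> y' \<in> carrier R \<and> m' \<in> T \<and> rfrac x m = rfrac x' m' \<and>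
      rfrac y m = rfrac y' m' \<and> H = rfrac (x' \<oplus> y') m'"
  then obtain x' y' m' where "x' \<in> carrier R" "y' \<in> carrier R" "m' \<in> T" "rfrac x m = rfrac x' m'"
      "rfrac y m = rfrac y' m'" "H = rfrac (x' \<oplus> y') m'" by blast
  then show "H = rfrac (x \<oplus> y) m" using frac_add_well_defined[OF x y m] by metis
qed

lemma frac_add_closed:
  assumes "F \<in> fracs" "G \<in> fracs"
  shows "frac_add F G \<in> fracs"
proof -
  obtain x y m where "x \<in> carrier R" "y \<in> carrier R" "m \<in> T" "F = rfrac x m" "G = rfrac y m"
    using fracs_common_denominator[OF assms] by blast
  then show ?thesis using frac_add_rfrac by simp
qed

text \<open>\<open>ore_swap c u s b\<close> says \<open>s\<^sup>-\<^sup>1 b = c u\<^sup>-\<^sup>1\<close>; it turns the product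
  \<open>a s\<^sup>-\<^sup>1 \<cdot> b t\<^sup>-\<^sup>1\<close> into \<open>(a c) (t u)\<^sup>-\<^sup>1\<close>.\<close>
definition ore_swap :: "'a \<Rightarrow> 'a \<Rightarrow> 'a \<Rightarrow> 'a \<Rightarrow> bool" where
  "ore_swap c u s b \<longleftrightarrow> c \<in> carrier R \<and> u \<in> T \<and> b \<otimes> u = s \<otimes> c"

lemma ore_swap_exists: "s \<in> T \<Longrightarrow> b \<in> carrier R \<Longrightarrow> \<exists>c u. ore_swap c u s b"
  using ore unfolding ore_swap_def by blast

lemma frac_mult_swap_indep:
  assumes a: "a \<in> carrier R" and s: "s \<in> T" and b: "b \<in> carrier R" and t: "t \<in> T"
    and v1: "ore_swap c u s b" and v2: "ore_swap c' u' s b"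
  shows "rfrac (a \<otimes> c) (t \<otimes> u) = rfrac (a \<otimes> c') (t \<otimes> u')"
proof -
  have c: "c \<in> carrier R" and u: "u \<in> T" and e1: "b \<otimes> u = s \<otimes> c" using v1 unfolding ore_swap_def by auto
  have c': "c' \<in> carrier R" and u': "u' \<in> T" and e2: "b \<otimes> u' = s \<otimes> c'" using v2 unfolding ore_swap_def by auto
  obtain v v' where v: "v \<in> carrier R" and v': "v' \<in> carrier R" and vv: "u \<otimes> v = u' \<otimes> v'"
    and uv: "u \<otimes> v \<in> T" using common_right_multiple[OF u u'] by blast
  have cv: "c \<otimes> v = c' \<otimes> v'"
  proof (rule T_left_cancel[OF s])
    have "s \<otimes> (c \<otimes> v) = (b \<otimes> u) \<otimes> v" using s c v e1 by (simp add: m_assoc)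
    also have "\<dots> = b \<otimes> (u' \<otimes> v')" using b u v vv by (simp add: m_assoc)
    also have "\<dots> = s \<otimes> (c' \<otimes> v')" using b u' v' e2 s c' by (simp add: m_assoc[symmetric])
    finally show "s \<otimes> (c \<otimes> v) = s \<otimes> (c' \<otimes> v')" .
  qed (use c v c' v' in auto)
  show ?thesis
  proof (rule rfrac_eqI, unfold frac_rel_def, intro conjI bexI)
    show "(t \<otimes> u) \<otimes> v = (t \<otimes> u') \<otimes> v'" using t u u' v v' vv by (simp add: m_assoc)
    show "(t \<otimes> u) \<otimes> v \<in> T" using mult_in_T[OF t uv] t u v by (simp add: m_assoc)
    show "(a \<otimes> c) \<otimes> v = (a \<otimes> c') \<otimes> v'" using a c c' v v' cv by (simp add: m_assoc)
  qed (use a c c' t u u' v v' mult_in_T in auto)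
qed

lemma frac_mult_expand:
  assumes a: "a \<in> carrier R" and s: "s \<in> T" and b: "b \<in> carrier R" and t: "t \<in> T"
    and vl: "ore_swap c u s b"
    and e: "e \<in> carrier R" and se: "s \<otimes> e \<in> T" and f: "f \<in> carrier R" and tf: "t \<otimes> f \<in> T"
  shows "\<exists>c1 u1. ore_swap c1 u1 (s \<otimes> e) (b \<otimes> f) \<and> rfrac (a \<otimes> c) (t \<otimes> u) = rfrac ((a \<otimes> e) \<otimes> c1) ((t \<otimes> f) \<otimes> u1)"
proof -
  have c: "c \<in> carrier R" and u: "u \<in> T" and e1: "b \<otimes> u = s \<otimes> c" using vl unfolding ore_swap_def by auto
  obtain u1 w where u1: "u1 \<in> T" and w: "w \<in> carrier R" and fw: "f \<otimes> u1 = u \<otimes> w"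
    using ore[OF f u] by blast
  have tuw: "(t \<otimes> u) \<otimes> w = (t \<otimes> f) \<otimes> u1" using t u w f u1 fw by (simp add: m_assoc)
  have tuwT: "(t \<otimes> u) \<otimes> w \<in> T" using tuw mult_in_T[OF tf u1] by simp
  have "rfrac (a \<otimes> c) (t \<otimes> u) = rfrac ((a \<otimes> c) \<otimes> w) ((t \<otimes> u) \<otimes> w)"
    by (rule rfrac_expand) (use a c t u w tuwT mult_in_T in auto)
  also have "\<dots> = rfrac (a \<otimes> (c \<otimes> w)) ((t \<otimes> f) \<otimes> u1)" using a c w tuw by (simp add: m_assoc)
  finally have eq1: "rfrac (a \<otimes> c) (t \<otimes> u) = rfrac (a \<otimes> (c \<otimes> w)) ((t \<otimes> f) \<otimes> u1)" .
  have bf: "b \<otimes> f \<in> carrier R" using b f by simp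
  have "(b \<otimes> f) \<otimes> u1 = b \<otimes> (u \<otimes> w)" using b f u1 fw by (simp add: m_assoc)
  also have "\<dots> = (b \<otimes> u) \<otimes> w" using b u w by (simp add: m_assoc)
  also have "\<dots> = s \<otimes> (c \<otimes> w)" using e1 s c w by (simp add: m_assoc)
  finally have vcw: "ore_swap (c \<otimes> w) u1 s (b \<otimes> f)"
    unfolding ore_swap_def using c w u1 by simp
  obtain c2 u2 where vc2: "ore_swap c2 u2 (s \<otimes> e) (b \<otimes> f)" using ore_swap_exists[OF se bf] by blast
  have c2: "c2 \<in> carrier R" and u2: "u2 \<in> T" and e2: "(b \<otimes> f) \<otimes> u2 = (s \<otimes> e) \<otimes> c2"
    using vc2 unfolding ore_swap_def by auto
  have vec2: "ore_swap (e \<otimes> c2) u2 s (b \<otimes> f)"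
    unfolding ore_swap_def using e2 s e c2 u2 by (simp add: m_assoc)
  have "rfrac (a \<otimes> (c \<otimes> w)) ((t \<otimes> f) \<otimes> u1) = rfrac (a \<otimes> (e \<otimes> c2)) ((t \<otimes> f) \<otimes> u2)"
    using frac_mult_swap_indep[OF a s bf tf vcw vec2] t f by simp
  also have "\<dots> = rfrac ((a \<otimes> e) \<otimes> c2) ((t \<otimes> f) \<otimes> u2)" using a e c2 by (simp add: m_assoc)
  finally show ?thesis using eq1 vc2 by blast
qed

lemma frac_mult_well_defined:
  assumes a: "a \<in> carrier R" and s: "s \<in> T" and b: "b \<in> carrier R" and t: "t \<in> T"
    and aa: "aa \<in> carrier R" and s': "s' \<in> T" and b': "b' \<in> carrier R" and t': "t' \<in> T"
    and v1: "ore_swap c u s b" and v2: "ore_swap c' u' s' b'"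
    and ea: "rfrac a s = rfrac aa s'" and eb: "rfrac b t = rfrac b' t'"
  shows "rfrac (a \<otimes> c) (t \<otimes> u) = rfrac (aa \<otimes> c') (t' \<otimes> u')"
proof -
  have ra: "frac_rel a s aa s'" using ea rfrac_eq_iff a s aa s' by blast
  have rb: "frac_rel b t b' t'" using eb rfrac_eq_iff b t b' t' by blast
  obtain e e' where e: "e \<in> carrier R" and e': "e' \<in> carrier R" and see: "s \<otimes> e = s' \<otimes> e'"
    and seT: "s \<otimes> e \<in> T" and aee: "a \<otimes> e = aa \<otimes> e'" using ra unfolding frac_rel_def by blast
  obtain f f' where f: "f \<in> carrier R" and f': "f' \<in> carrier R" and tff: "t \<otimes> f = t' \<otimes> f'"
    and tfT: "t \<otimes> f \<in> T" and bff: "b \<otimes> f = b' \<otimes> f'" using rb unfolding frac_rel_def by blast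
  obtain c1 u1 where vc1: "ore_swap c1 u1 (s \<otimes> e) (b \<otimes> f)"
    and q1: "rfrac (a \<otimes> c) (t \<otimes> u) = rfrac ((a \<otimes> e) \<otimes> c1) ((t \<otimes> f) \<otimes> u1)"
    using frac_mult_expand[OF a s b t v1 e seT f tfT] by blast
  obtain c1' u1' where vc1': "ore_swap c1' u1' (s' \<otimes> e') (b' \<otimes> f')"
    and q2: "rfrac (aa \<otimes> c') (t' \<otimes> u') = rfrac ((aa \<otimes> e') \<otimes> c1') ((t' \<otimes> f') \<otimes> u1')"
  proof -
    have seT': "s' \<otimes> e' \<in> T" using see seT by simp
    have tfT': "t' \<otimes> f' \<in> T" using tff tfT by simp
    show ?thesis using frac_mult_expand[OF aa s' b' t' v2 e' seT' f' tfT'] that by blast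
  qed
  have "rfrac ((a \<otimes> e) \<otimes> c1) ((t \<otimes> f) \<otimes> u1) = rfrac ((a \<otimes> e) \<otimes> c1') ((t \<otimes> f) \<otimes> u1')"
    by (rule frac_mult_swap_indep) (use a e seT b f tfT vc1 vc1' see bff b' f' in auto)
  then show ?thesis using q1 q2 aee tff by simp
qed

definition frac_mult :: "('a \<times> 'a) set \<Rightarrow> ('a \<times> 'a) set \<Rightarrow> ('a \<times> 'a) set" where
  "frac_mult F G = (SOME H. \<exists>a s b t c u. a \<in> carrier R \<and> s \<in> T \<and> b \<in> carrier R \<and> t \<in> T \<and>
      ore_swap c u s b \<and> F = rfrac a s \<and> G = rfrac b t \<and> H = rfrac (a \<otimes> c) (t \<otimes> u))"

lemma frac_mult_rfrac:
  assumes a: "a \<in> carrier R" and s: "s \<in> T" and b: "b \<in> carrier R" and t: "t \<in> T"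
    and v: "ore_swap c u s b"
  shows "frac_mult (rfrac a s) (rfrac b t) = rfrac (a \<otimes> c) (t \<otimes> u)"
  unfolding frac_mult_def
proof (rule someI2)
  show "\<exists>aa s' b' t' c' u'. aa \<in> carrier R \<and> s' \<in> T \<and> b' \<in> carrier R \<and> t' \<in> T \<and>
      ore_swap c' u' s' b' \<and> rfrac a s = rfrac aa s' \<and> rfrac b t = rfrac b' t' \<and> rfrac (a \<otimes> c) (t \<otimes> u) = rfrac (aa \<otimes> c') (t' \<otimes> u')"
    using assms by blast
next
  fix H assume "\<exists>aa s' b' t' c' u'. aa \<in> carrier R \<and> s' \<in> T \<and> b' \<in> carrier R \<and> t' \<in> T \<and>
      ore_swap c' u' s' b' \<and> rfrac a s = rfrac aa s' \<and> rfrac b t = rfrac b' t' \<and> H = rfrac (aa \<otimes> c') (t' \<otimes> u')"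
  then obtain aa s' b' t' c' u' where "aa \<in> carrier R" "s' \<in> T" "b' \<in> carrier R" "t' \<in> T"
      "ore_swap c' u' s' b'" "rfrac a s = rfrac aa s'" "rfrac b t = rfrac b' t'" "H = rfrac (aa \<otimes> c') (t' \<otimes> u')"
    by blast
  then show "H = rfrac (a \<otimes> c) (t \<otimes> u)" using frac_mult_well_defined[OF a s b t] v by metis
qed

lemma frac_mult_closed:
  assumes "F \<in> fracs" "G \<in> fracs"
  shows "frac_mult F G \<in> fracs"
proof -
  obtain a s where a: "a \<in> carrier R" and s: "s \<in> T" and X: "F = rfrac a s" using assms(1) by (rule fracsE)
  obtain b t where b: "b \<in> carrier R" and t: "t \<in> T" and Y: "G = rfrac b t" using assms(2) by (rule fracsE)
  obtain c u where v: "ore_swap c u s b" using ore_swap_exists[OF s b] by blast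
  then show ?thesis using frac_mult_rfrac[OF a s b t v] X Y a t mult_in_T unfolding ore_swap_def by auto
qed

definition frac_ring :: "('a \<times> 'a) set ring" where
  "frac_ring = \<lparr>carrier = fracs, monoid.mult = frac_mult, one = rfrac \<one> \<one>, ring.zero = rfrac \<zero> \<one>, ring.add = frac_add\<rparr>"

lemma ore_swap_common:
  assumes x: "x \<in> carrier R" and y: "y \<in> carrier R" and p: "p \<in> T"
  shows "\<exists>u\<in>T. \<exists>c1\<in>carrier R. \<exists>c2\<in>carrier R. x \<otimes> u = p \<otimes> c1 \<and> y \<otimes> u = p \<otimes> c2"
proof -
  obtain u1 c1 where u1: "u1 \<in> T" and c1: "c1 \<in> carrier R" and e1: "x \<otimes> u1 = p \<otimes> c1"
    using ore[OF x p] by blast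
  obtain u2 c2 where u2: "u2 \<in> T" and c2: "c2 \<in> carrier R" and e2: "(y \<otimes> u1) \<otimes> u2 = p \<otimes> c2"
    using ore[OF _ p, of "y \<otimes> u1"] y u1 by auto
  have "x \<otimes> (u1 \<otimes> u2) = p \<otimes> (c1 \<otimes> u2)" using e1 x u1 u2 p c1 by (simp add: m_assoc[symmetric])
  moreover have "y \<otimes> (u1 \<otimes> u2) = p \<otimes> c2" using e2 y u1 u2 by (simp add: m_assoc)
  ultimately show ?thesis using mult_in_T[OF u1 u2] c1 c2 u2 by (meson m_closed T_carrier)
qed

lemma frac_add_assoc:
  assumes "F \<in> fracs" "G \<in> fracs" "H \<in> fracs"
  shows "frac_add (frac_add F G) H = frac_add F (frac_add G H)"
proof -
  obtain x y z m where "x \<in> carrier R" "y \<in> carrier R" "z \<in> carrier R" "m \<in> T"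
    "F = rfrac x m" "G = rfrac y m" "H = rfrac z m"
    using fracs_common_denominator3[OF assms] by blast
  then show ?thesis by (simp add: frac_add_rfrac a_assoc)
qed

lemma frac_add_comm:
  assumes "F \<in> fracs" "G \<in> fracs"
  shows "frac_add F G = frac_add G F"
proof -
  obtain x y m where "x \<in> carrier R" "y \<in> carrier R" "m \<in> T" "F = rfrac x m" "G = rfrac y m"
    using fracs_common_denominator[OF assms] by blast
  then show ?thesis by (simp add: frac_add_rfrac a_comm)
qed

lemma rfrac_zero_eq: "m \<in> T \<Longrightarrow> rfrac \<zero> \<one> = rfrac \<zero> m"
  using rfrac_expand[of \<zero> \<one> m] one_in_T by simp

lemma frac_zero_add: "F \<in> fracs \<Longrightarrow> frac_add (rfrac \<zero> \<one>) F = F"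
  by (erule fracsE) (simp add: rfrac_zero_eq frac_add_rfrac)

lemma frac_add_inverse:
  assumes "F \<in> fracs"
  shows "\<exists>G\<in>fracs. frac_add G F = rfrac \<zero> \<one>"
proof -
  obtain a s where "a \<in> carrier R" "s \<in> T" "F = rfrac a s" using assms by (rule fracsE)
  then show ?thesis
    by (intro bexI[of _ "rfrac (\<ominus> a) s"]) (simp_all add: rfrac_zero_eq frac_add_rfrac l_neg)
qed

lemma frac_mult_assoc:
  assumes F: "F \<in> fracs" and G: "G \<in> fracs" and H: "H \<in> fracs"
  shows "frac_mult (frac_mult F G) H = frac_mult F (frac_mult G H)"
proof -
  obtain a s where a: "a \<in> carrier R" and s: "s \<in> T" and Fe: "F = rfrac a s" using F by (rule fracsE)
  obtain b t where b: "b \<in> carrier R" and t: "t \<in> T" and Ge: "G = rfrac b t" using G by (rule fracsE)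
  obtain e p where e: "e \<in> carrier R" and p: "p \<in> T" and He: "H = rfrac e p" using H by (rule fracsE)
  obtain c u where c: "c \<in> carrier R" and u: "u \<in> T" and bu: "b \<otimes> u = s \<otimes> c"
    using ore[OF b s] by blast
  have tu: "t \<otimes> u \<in> T" using mult_in_T t u by simp
  obtain d v where d: "d \<in> carrier R" and v: "v \<in> T" and ev: "e \<otimes> v = (t \<otimes> u) \<otimes> d"
    using ore[OF e tu] by blast
  have FG: "frac_mult F G = rfrac (a \<otimes> c) (t \<otimes> u)"
    unfolding Fe Ge by (rule frac_mult_rfrac[OF a s b t]) (simp add: ore_swap_def c u bu)
  have "frac_mult (frac_mult F G) H = rfrac ((a \<otimes> c) \<otimes> d) (p \<otimes> v)"
    unfolding FG He by (rule frac_mult_rfrac) (use a c tu e p d v ev in \<open>auto simp: ore_swap_def\<close>)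
  moreover have GH: "frac_mult G H = rfrac (b \<otimes> (u \<otimes> d)) (p \<otimes> v)"
    unfolding Ge He by (rule frac_mult_rfrac) (use b t e p d v ev u in \<open>auto simp: ore_swap_def m_assoc\<close>)
  have "frac_mult F (frac_mult G H) = rfrac (a \<otimes> (c \<otimes> d)) ((p \<otimes> v) \<otimes> \<one>)"
    unfolding GH Fe
  proof (rule frac_mult_rfrac)
    show "ore_swap (c \<otimes> d) \<one> s (b \<otimes> (u \<otimes> d))"
      unfolding ore_swap_def using b u d s c bu one_in_T by (simp add: m_assoc[symmetric])
  qed (use a s b u d p v mult_in_T in auto)
  ultimately show ?thesis using a c d p v by (simp add: m_assoc)
qed

lemma frac_one_mult: "F \<in> fracs \<Longrightarrow> frac_mult (rfrac \<one> \<one>) F = F"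
proof (erule fracsE)
  fix a s assume "a \<in> carrier R" "s \<in> T" "F = rfrac a s"
  then show ?thesis
    using frac_mult_rfrac[of \<one> \<one> a s a \<one>] one_in_T by (simp add: ore_swap_def)
qed

lemma frac_mult_one: "F \<in> fracs \<Longrightarrow> frac_mult F (rfrac \<one> \<one>) = F"
proof (erule fracsE)
  fix a s assume "a \<in> carrier R" "s \<in> T" "F = rfrac a s"
  then show ?thesis
    using frac_mult_rfrac[of a s \<one> \<one> \<one> s] one_in_T by (simp add: ore_swap_def)
qed

lemma frac_add_mult_distrib:
  assumes F: "F \<in> fracs" and G: "G \<in> fracs" and H: "H \<in> fracs"
  shows "frac_mult (frac_add F G) H = frac_add (frac_mult F H) (frac_mult G H)"
proof -
  obtain x y m where x: "x \<in> carrier R" and y: "y \<in> carrier R" and m: "m \<in> T"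
    and Fe: "F = rfrac x m" and Ge: "G = rfrac y m" using fracs_common_denominator[OF F G] by blast
  obtain e p where e: "e \<in> carrier R" and p: "p \<in> T" and He: "H = rfrac e p" using H by (rule fracsE)
  obtain c u where "c \<in> carrier R" "u \<in> T" "e \<otimes> u = m \<otimes> c"
    using ore[OF e m] by blast
  then have sw: "ore_swap c u m e" by (simp add: ore_swap_def)
  then show ?thesis
    using x y m e p unfolding Fe Ge He
    by (simp add: frac_add_rfrac frac_mult_rfrac[OF _ m e p sw] l_distr mult_in_T ore_swap_def)
qed

lemma frac_mult_add_distrib:
  assumes F: "F \<in> fracs" and G: "G \<in> fracs" and H: "H \<in> fracs"
  shows "frac_mult H (frac_add F G) = frac_add (frac_mult H F) (frac_mult H G)"
proof -
  obtain x y m where x: "x \<in> carrier R" and y: "y \<in> carrier R" and m: "m \<in> T"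
    and Fe: "F = rfrac x m" and Ge: "G = rfrac y m" using fracs_common_denominator[OF F G] by blast
  obtain e p where e: "e \<in> carrier R" and p: "p \<in> T" and He: "H = rfrac e p" using H by (rule fracsE)
  obtain u c1 c2 where u: "u \<in> T" and c1: "c1 \<in> carrier R" and c2: "c2 \<in> carrier R"
    and e1: "x \<otimes> u = p \<otimes> c1" and e2: "y \<otimes> u = p \<otimes> c2" using ore_swap_common[OF x y p] by blast
  have "ore_swap c1 u p x" "ore_swap c2 u p y" "ore_swap (c1 \<oplus> c2) u p (x \<oplus> y)"
    using x y u p c1 c2 e1 e2 by (simp_all add: ore_swap_def l_distr r_distr)
  then show ?thesis
    using x y m e p c1 c2 u unfolding Fe Ge He
    by (simp add: frac_add_rfrac frac_mult_rfrac[OF e p _ m] r_distr mult_in_T)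
qed

lemma ring_frac_ring: "ring frac_ring"
proof (rule ringI)
  show "abelian_group frac_ring"
  proof (rule abelian_groupI, unfold frac_ring_def ring_record_simps)
    fix F G assume "F \<in> fracs" "G \<in> fracs"
    then show "frac_add F G = frac_add G F" by (rule frac_add_comm)
  qed (simp_all add: frac_add_closed frac_add_assoc frac_zero_add frac_add_inverse one_in_T)
  show "monoid frac_ring"
    by (rule monoidI, unfold frac_ring_def ring_record_simps)
       (simp_all add: frac_mult_closed frac_mult_assoc frac_one_mult frac_mult_one one_in_T)
qed (simp_all add: frac_ring_def frac_add_mult_distrib frac_mult_add_distrib)

definition frac_of :: "'a \<Rightarrow> ('a \<times> 'a) set" where
  "frac_of a = rfrac a \<one>"

lemma frac_of_hom: "frac_of \<in> ring_hom R frac_ring"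
proof (rule ring_hom_memI, unfold frac_ring_def ring_record_simps frac_of_def)
  fix x y assume x: "x \<in> carrier R" and y: "y \<in> carrier R"
  show "rfrac x \<one> \<in> fracs" using x one_in_T by simp
  show "rfrac (x \<otimes> y) \<one> = frac_mult (rfrac x \<one>) (rfrac y \<one>)"
    using frac_mult_rfrac[OF x one_in_T y one_in_T, of y \<one>] x y one_in_T by (simp add: ore_swap_def)
  show "rfrac (x \<oplus> y) \<one> = frac_add (rfrac x \<one>) (rfrac y \<one>)"
    using frac_add_rfrac[OF x y one_in_T] by simp
qed simp

lemma frac_of_Units: "t \<in> T \<Longrightarrow> frac_of t \<in> Units frac_ring"
proof -
  assume t: "t \<in> T"
  have tc: "t \<in> carrier R" using t by simp
  have i1: "frac_mult (rfrac t \<one>) (rfrac \<one> t) = rfrac \<one> \<one>"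
  proof -
    have "frac_mult (rfrac t \<one>) (rfrac \<one> t) = rfrac (t \<otimes> \<one>) (t \<otimes> \<one>)"
      by (rule frac_mult_rfrac) (use t one_in_T in \<open>auto simp: ore_swap_def\<close>)
    also have "\<dots> = rfrac \<one> \<one>"
      by (rule rfrac_eqI) (unfold frac_rel_def, use t one_in_T mult_in_T[OF t t] in \<open>auto intro!: bexI[of _ \<one>] bexI[of _ t]\<close>)
    finally show ?thesis .
  qed
  have i2: "frac_mult (rfrac \<one> t) (rfrac t \<one>) = rfrac \<one> \<one>"
  proof -
    have "frac_mult (rfrac \<one> t) (rfrac t \<one>) = rfrac (\<one> \<otimes> \<one>) (\<one> \<otimes> \<one>)"
      by (rule frac_mult_rfrac) (use t one_in_T in \<open>auto simp: ore_swap_def\<close>)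
    then show ?thesis by simp
  qed
  show ?thesis unfolding Units_def frac_ring_def frac_of_def
    using i1 i2 t one_in_T by auto
qed

lemma frac_of_inj: "x \<in> carrier R \<Longrightarrow> frac_of x = \<zero>\<^bsub>frac_ring\<^esub> \<Longrightarrow> x = \<zero>"
proof -
  assume x: "x \<in> carrier R" and "frac_of x = \<zero>\<^bsub>frac_ring\<^esub>"
  then have "rfrac x \<one> = rfrac \<zero> \<one>" by (simp add: frac_of_def frac_ring_def)
  then have "frac_rel x \<one> \<zero> \<one>" using rfrac_eq_iff x one_in_T by blast
  then have "x \<otimes> \<one> = \<zero> \<otimes> \<one>" by (rule frac_rel_common_multiple) (use one_in_T in auto)
  then show "x = \<zero>" using x by simp
qed

end

lemma regular_right_ore_localization:
  fixes B :: "('b, 'm) ring_scheme"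
  assumes "regular_right_ore B T"
  obtains L :: "('b \<times> 'b) set ring" and g where "ring L" "g \<in> ring_hom B L"
    "\<And>t. t \<in> T \<Longrightarrow> g t \<in> Units L" "\<And>x. x \<in> carrier B \<Longrightarrow> g x = \<zero>\<^bsub>L\<^esub> \<Longrightarrow> x = \<zero>\<^bsub>B\<^esub>"
proof -
  interpret regular_right_ore B T by (rule assms)
  show ?thesis using that ring_frac_ring frac_of_hom frac_of_Units frac_of_inj by blast
qed

lemma right_ore_setD:
  assumes "right_ore_set A T"
  shows "T \<subseteq> carrier A" "\<one>\<^bsub>A\<^esub> \<in> T" "\<zero>\<^bsub>A\<^esub> \<notin> T"
    "\<And>s t. s \<in> T \<Longrightarrow> t \<in> T \<Longrightarrow> s \<otimes>\<^bsub>A\<^esub> t \<in> T"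
    "\<And>r s. r \<in> carrier A \<Longrightarrow> s \<in> T \<Longrightarrow> \<exists>t\<in>T. \<exists>r'\<in>carrier A. r \<otimes>\<^bsub>A\<^esub> t = s \<otimes>\<^bsub>A\<^esub> r'"
  using assms by (auto simp: right_ore_set_def mult_set_def)

lemma right_denominator_set_if_C':
  assumes "ring A" "right_ore_set A T" "T \<subseteq> C' A"
  shows "right_denominator_set A T"
proof -
  interpret ring A by fact
  show ?thesis
    using assms(2,3) right_ore_setD(2)[OF assms(2)] unfolding right_denominator_set_def C'_def
    by (auto intro!: bexI[of _ "\<one>\<^bsub>A\<^esub>"])
qed

lemma ideal_ass_r:
  assumes A: "ring A" and T: "right_ore_set A T"
  shows "ideal (ass_r A T) A"
proof -
  interpret A: ring A by (rule A)
  note T_carrier = subsetD[OF right_ore_setD(1)[OF T]]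
  note ore = right_ore_setD(5)[OF T]
  show ?thesis
  proof (rule idealI[OF A])
    show "subgroup (ass_r A T) (add_monoid A)"
    proof (rule A.add.subgroupI)
      show "ass_r A T \<subseteq> carrier A" by (auto simp: ass_r_def)
      have "\<zero>\<^bsub>A\<^esub> \<in> ass_r A T"
        using right_ore_setD(2)[OF T] unfolding ass_r_def by force
      then show "ass_r A T \<noteq> {}" by blast
    next
      fix a assume "a \<in> ass_r A T"
      then obtain t where "a \<in> carrier A" "t \<in> T" "a \<otimes>\<^bsub>A\<^esub> t = \<zero>\<^bsub>A\<^esub>"
        by (auto simp: ass_r_def)
      then show "\<ominus>\<^bsub>A\<^esub> a \<in> ass_r A T"
        using T_carrier by (auto simp: ass_r_def A.l_minus)
    next
      fix a b assume "a \<in> ass_r A T" "b \<in> ass_r A T"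
      then obtain t1 t2 where a: "a \<in> carrier A" "t1 \<in> T" "a \<otimes>\<^bsub>A\<^esub> t1 = \<zero>\<^bsub>A\<^esub>"
        and b: "b \<in> carrier A" "t2 \<in> T" "b \<otimes>\<^bsub>A\<^esub> t2 = \<zero>\<^bsub>A\<^esub>"
        by (auto simp: ass_r_def)
      obtain u r where u: "u \<in> T" and r: "r \<in> carrier A" and e: "t1 \<otimes>\<^bsub>A\<^esub> u = t2 \<otimes>\<^bsub>A\<^esub> r"
        using ore[OF T_carrier[OF a(2)] b(2)] by blast
      \<comment> \<open>a common right multiple of the two annihilators annihilates the sum\<close>
      have "b \<otimes>\<^bsub>A\<^esub> (t1 \<otimes>\<^bsub>A\<^esub> u) = (b \<otimes>\<^bsub>A\<^esub> t2) \<otimes>\<^bsub>A\<^esub> r"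
        using b(1,2) u r e T_carrier by (simp add: A.m_assoc)
      then have "(a \<oplus>\<^bsub>A\<^esub> b) \<otimes>\<^bsub>A\<^esub> (t1 \<otimes>\<^bsub>A\<^esub> u) = (a \<otimes>\<^bsub>A\<^esub> t1) \<otimes>\<^bsub>A\<^esub> u \<oplus>\<^bsub>A\<^esub> (b \<otimes>\<^bsub>A\<^esub> t2) \<otimes>\<^bsub>A\<^esub> r"
        using a(1,2) b(1,2) u r T_carrier by (simp add: A.l_distr A.m_assoc)
      then show "a \<oplus>\<^bsub>A\<^esub> b \<in> ass_r A T"
        using a b u r T_carrier right_ore_setD(4)[OF T a(2) u] by (auto simp: ass_r_def)
    qed
  next
    fix a x assume "a \<in> ass_r A T" and x: "x \<in> carrier A"
    then obtain t where a: "a \<in> carrier A" "t \<in> T" "a \<otimes>\<^bsub>A\<^esub> t = \<zero>\<^bsub>A\<^esub>"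
      by (auto simp: ass_r_def)
    then have "(x \<otimes>\<^bsub>A\<^esub> a) \<otimes>\<^bsub>A\<^esub> t = \<zero>\<^bsub>A\<^esub>"
      using x T_carrier by (simp add: A.m_assoc)
    then show "x \<otimes>\<^bsub>A\<^esub> a \<in> ass_r A T"
      using x a unfolding ass_r_def by blast
    obtain u r where u: "u \<in> T" and r: "r \<in> carrier A" and e: "x \<otimes>\<^bsub>A\<^esub> u = t \<otimes>\<^bsub>A\<^esub> r"
      using ore[OF x a(2)] by blast
    have "(a \<otimes>\<^bsub>A\<^esub> x) \<otimes>\<^bsub>A\<^esub> u = (a \<otimes>\<^bsub>A\<^esub> t) \<otimes>\<^bsub>A\<^esub> r"
      using x a(1,2) u r e T_carrier by (simp add: A.m_assoc)
    then show "a \<otimes>\<^bsub>A\<^esub> x \<in> ass_r A T"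
      using x a u r by (auto simp: ass_r_def)
  qed
qed

lemma regular_right_ore_quotient_ass_r:
  assumes A: "ring A" and T: "right_ore_set A T" and regular: "T \<subseteq> C' A"
  shows "regular_right_ore (A Quot ass_r A T) ((\<lambda>x. ass_r A T +>\<^bsub>A\<^esub> x) ` T)"
proof -
  define N where "N = ass_r A T"
  define \<pi> where "\<pi> = (\<lambda>x. N +>\<^bsub>A\<^esub> x)"
  interpret A: ring A by (rule A)
  interpret N: ideal N A unfolding N_def by (rule ideal_ass_r[OF A T])
  interpret \<pi>: ring_hom_ring A "A Quot N" \<pi> unfolding \<pi>_def by (rule N.rcos_ring_hom_ring)
  note T_carrier = subsetD[OF right_ore_setD(1)[OF T]]
  have \<pi>_zero_iff: "\<pi> x = \<zero>\<^bsub>A Quot N\<^esub> \<longleftrightarrow> (\<exists>t\<in>T. x \<otimes>\<^bsub>A\<^esub> t = \<zero>\<^bsub>A\<^esub>)"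
    if x: "x \<in> carrier A" for x
  proof -
    have "\<pi> x = \<zero>\<^bsub>A Quot N\<^esub> \<longleftrightarrow> x \<in> N"
      unfolding \<pi>_def FactRing_zero by (rule N.rcos_eq_ideal_iff[OF x])
    then show ?thesis using x unfolding N_def ass_r_def by blast
  qed
  have "regular_right_ore (A Quot N) (\<pi> ` T)"
  proof (intro regular_right_ore.intro N.quotient_is_ring regular_right_ore_axioms.intro)
    show "\<pi> ` T \<subseteq> carrier (A Quot N)" using T_carrier by auto
    show "\<one>\<^bsub>A Quot N\<^esub> \<in> \<pi> ` T" using right_ore_setD(2)[OF T] \<pi>.hom_one by force
  next
    fix s t assume "s \<in> \<pi> ` T" "t \<in> \<pi> ` T"
    then obtain s0 t0 where st: "s0 \<in> T" "t0 \<in> T" "s = \<pi> s0" "t = \<pi> t0" by blast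
    then have "s \<otimes>\<^bsub>A Quot N\<^esub> t = \<pi> (s0 \<otimes>\<^bsub>A\<^esub> t0)" using T_carrier by simp
    then show "s \<otimes>\<^bsub>A Quot N\<^esub> t \<in> \<pi> ` T"
      using right_ore_setD(4)[OF T st(1,2)] by blast
  next
    fix r s assume r: "r \<in> carrier (A Quot N)" and "s \<in> \<pi> ` T"
    then obtain s0 where s0: "s0 \<in> T" and "s = \<pi> s0" by blast
    moreover obtain r0 where r0: "r0 \<in> carrier A" and "r = \<pi> r0"
      using r unfolding \<pi>_def by (rule FactRing_carrierE)
    ultimately have rs: "r = \<pi> r0" "s = \<pi> s0" by simp_all
    obtain t r' where t: "t \<in> T" and r': "r' \<in> carrier A" and e: "r0 \<otimes>\<^bsub>A\<^esub> t = s0 \<otimes>\<^bsub>A\<^esub> r'"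
      using right_ore_setD(5)[OF T r0 s0] by blast
    have "r \<otimes>\<^bsub>A Quot N\<^esub> \<pi> t = s \<otimes>\<^bsub>A Quot N\<^esub> \<pi> r'"
      using arg_cong[OF e, of \<pi>] rs r0 s0 t r' T_carrier by simp
    moreover have "\<pi> t \<in> \<pi> ` T" "\<pi> r' \<in> carrier (A Quot N)" using t r' by auto
    ultimately show "\<exists>t\<in>\<pi> ` T. \<exists>r'\<in>carrier (A Quot N). r \<otimes>\<^bsub>A Quot N\<^esub> t = s \<otimes>\<^bsub>A Quot N\<^esub> r'"
      by blast
  next
    fix s x assume "s \<in> \<pi> ` T" and x: "x \<in> carrier (A Quot N)"
      and z: "s \<otimes>\<^bsub>A Quot N\<^esub> x = \<zero>\<^bsub>A Quot N\<^esub>"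
    then obtain s0 where s0: "s0 \<in> T" and "s = \<pi> s0" by blast
    moreover obtain x0 where x0: "x0 \<in> carrier A" and "x = \<pi> x0"
      using x unfolding \<pi>_def by (rule FactRing_carrierE)
    ultimately have sx: "s = \<pi> s0" "x = \<pi> x0" by simp_all
    then have "\<pi> (s0 \<otimes>\<^bsub>A\<^esub> x0) = \<zero>\<^bsub>A Quot N\<^esub>" using z s0 x0 T_carrier by simp
    then obtain u where u: "u \<in> T" and "(s0 \<otimes>\<^bsub>A\<^esub> x0) \<otimes>\<^bsub>A\<^esub> u = \<zero>\<^bsub>A\<^esub>"
      using \<pi>_zero_iff s0 x0 T_carrier by blast
    then have "s0 \<otimes>\<^bsub>A\<^esub> (x0 \<otimes>\<^bsub>A\<^esub> u) = \<zero>\<^bsub>A\<^esub>"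
      using s0 x0 T_carrier by (simp add: A.m_assoc)
    then have "x0 \<otimes>\<^bsub>A\<^esub> u = \<zero>\<^bsub>A\<^esub>"
      using regular s0 x0 u T_carrier unfolding C'_def by blast
    then show "x = \<zero>\<^bsub>A Quot N\<^esub>" using \<pi>_zero_iff x0 u sx by blast
  next
    fix s x assume "s \<in> \<pi> ` T" and x: "x \<in> carrier (A Quot N)"
      and z: "x \<otimes>\<^bsub>A Quot N\<^esub> s = \<zero>\<^bsub>A Quot N\<^esub>"
    then obtain s0 where s0: "s0 \<in> T" and "s = \<pi> s0" by blast
    moreover obtain x0 where x0: "x0 \<in> carrier A" and "x = \<pi> x0"
      using x unfolding \<pi>_def by (rule FactRing_carrierE)
    ultimately have sx: "s = \<pi> s0" "x = \<pi> x0" by simp_all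
    then have "\<pi> (x0 \<otimes>\<^bsub>A\<^esub> s0) = \<zero>\<^bsub>A Quot N\<^esub>" using z s0 x0 T_carrier by simp
    then obtain u where u: "u \<in> T" and "(x0 \<otimes>\<^bsub>A\<^esub> s0) \<otimes>\<^bsub>A\<^esub> u = \<zero>\<^bsub>A\<^esub>"
      using \<pi>_zero_iff s0 x0 T_carrier by blast
    then have "x0 \<otimes>\<^bsub>A\<^esub> (s0 \<otimes>\<^bsub>A\<^esub> u) = \<zero>\<^bsub>A\<^esub>"
      using s0 x0 T_carrier by (simp add: A.m_assoc)
    then show "x = \<zero>\<^bsub>A Quot N\<^esub>"
      using \<pi>_zero_iff x0 sx right_ore_setD(4)[OF T s0 u] by blast
  qed
  then show ?thesis by (simp add: N_def \<pi>_def)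
qed

lemma left_regular_ore_localization:
  fixes A :: "'c ring"
  assumes A: "ring A" and T: "right_ore_set A T" and regular: "T \<subseteq> C' A"
  obtains L :: "('c set \<times> 'c set) set ring" and g where "ring L" "g \<in> ring_hom A L"
    "\<And>t. t \<in> T \<Longrightarrow> g t \<in> Units L" "\<And>x. x \<in> carrier A \<Longrightarrow> g x = \<zero>\<^bsub>L\<^esub> \<Longrightarrow> x \<in> ass_r A T"
proof -
  define \<pi> where "\<pi> = (\<lambda>x. ass_r A T +>\<^bsub>A\<^esub> x)"
  interpret N: ideal "ass_r A T" A by (rule ideal_ass_r[OF A T])
  interpret \<pi>: ring_hom_ring A "A Quot ass_r A T" \<pi> unfolding \<pi>_def by (rule N.rcos_ring_hom_ring)
  obtain L :: "('c set \<times> 'c set) set ring" and g where L: "ring L"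
    and g: "g \<in> ring_hom (A Quot ass_r A T) L" and units: "\<And>t. t \<in> \<pi> ` T \<Longrightarrow> g t \<in> Units L"
    and inj: "\<And>x. x \<in> carrier (A Quot ass_r A T) \<Longrightarrow> g x = \<zero>\<^bsub>L\<^esub> \<Longrightarrow> x = \<zero>\<^bsub>A Quot ass_r A T\<^esub>"
    using regular_right_ore_localization[OF regular_right_ore_quotient_ass_r[OF A T regular, folded \<pi>_def]]
    by blast
  show ?thesis
  proof
    show "g \<circ> \<pi> \<in> ring_hom A L" by (rule ring_hom_trans[OF \<pi>.homh g])
    fix x assume x: "x \<in> carrier A" and "(g \<circ> \<pi>) x = \<zero>\<^bsub>L\<^esub>"
    then have "\<pi> x = \<zero>\<^bsub>A Quot ass_r A T\<^esub>" using inj by simp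
    then show "x \<in> ass_r A T"
      using N.rcos_eq_ideal_iff[OF x] by (simp add: \<pi>_def FactRing_zero)
  qed (use L units in auto)
qed

lemma a'_cond_iff:
  assumes R: "ring R" and S: "S \<subseteq> carrier R"
  shows "a'_cond R S b \<longleftrightarrow> ideal b R \<and> (\<forall>s\<in>S. \<forall>x\<in>carrier R. s \<otimes>\<^bsub>R\<^esub> x \<in> b \<longrightarrow> x \<in> b)"
proof (cases "ideal b R")
  case True
  interpret b: ideal b R by (rule True)
  have "b +>\<^bsub>R\<^esub> s \<in> C' (R Quot b) \<longleftrightarrow> (\<forall>x\<in>carrier R. s \<otimes>\<^bsub>R\<^esub> x \<in> b \<longrightarrow> x \<in> b)"
    if s: "s \<in> S" for s
  proof -
    have "b +>\<^bsub>R\<^esub> s \<in> C' (R Quot b) \<longleftrightarrow>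
        (\<forall>x\<in>carrier R. (b +>\<^bsub>R\<^esub> s) \<otimes>\<^bsub>R Quot b\<^esub> (b +>\<^bsub>R\<^esub> x) = b \<longrightarrow> b +>\<^bsub>R\<^esub> x = b)"
      using FactRing_carrierI[OF subsetD[OF S s], of b]
      by (simp add: C'_def FactRing_zero ball_FactRing_carrier)
    also have "\<dots> \<longleftrightarrow> (\<forall>x\<in>carrier R. s \<otimes>\<^bsub>R\<^esub> x \<in> b \<longrightarrow> x \<in> b)"
      using subsetD[OF S s] by (simp add: b.FactRing_mult_rcos b.rcos_eq_ideal_iff)
    finally show ?thesis .
  qed
  then show ?thesis using True unfolding a'_cond_def by blast
qed (simp add: a'_cond_def)

lemma a'_eq_Inter:
  assumes R: "ring R" and S: "S \<subseteq> carrier R"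
  shows "a' R S = \<Inter>{b. a'_cond R S b}" and "a'_cond R S (a' R S)"
proof -
  interpret R: ring R by (rule R)
  have "a'_cond R S (carrier R)"
    unfolding a'_cond_iff[OF R S] by (simp add: R.oneideal)
  moreover have "ideal (\<Inter>{b. a'_cond R S b}) R" if "a'_cond R S (carrier R)"
    using that by (intro R.i_Intersect) (auto simp: a'_cond_iff[OF R S])
  ultimately have inter: "a'_cond R S (\<Inter>{b. a'_cond R S b})"
    unfolding a'_cond_iff[OF R S] by blast
  show "a' R S = \<Inter>{b. a'_cond R S b}"
    unfolding a'_def by (rule the_equality) (use inter in blast)+
  with inter show "a'_cond R S (a' R S)" by simp
qed

lemma a'_least: "ring R \<Longrightarrow> S \<subseteq> carrier R \<Longrightarrow> a'_cond R S b \<Longrightarrow> a' R S \<subseteq> b"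
  using a'_eq_Inter(1)[of R S] by blast

section \<open>Comparison with the Ore localization of \<open>R/a'(S)\<close>\<close>

context ore_univ_localization
begin

abbreviation R' where "R' \<equiv> R Quot a' R S"
abbreviation \<pi>' where "\<pi>' \<equiv> \<lambda>r. a' R S +>\<^bsub>R\<^esub> r"
abbreviation S' where "S' \<equiv> \<pi>' ` S"

lemma ideal_a': "ideal (a' R S) R"
  using a'_eq_Inter(2)[OF ring_R S_subset] by (simp add: a'_cond_def)

lemma a'_cancel: "s \<in> S \<Longrightarrow> x \<in> carrier R \<Longrightarrow> s \<otimes>\<^bsub>R\<^esub> x \<in> a' R S \<Longrightarrow> x \<in> a' R S"
  using a'_eq_Inter(2)[OF ring_R S_subset] a'_cond_iff[OF ring_R S_subset] by blast

sublocale a': ideal "a' R S" R by (rule ideal_a')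
sublocale \<pi>': ring_hom_ring R R' \<pi>' by (rule a'.rcos_ring_hom_ring)

lemma \<pi>'_eq_zero_iff: "r \<in> carrier R \<Longrightarrow> \<pi>' r = \<zero>\<^bsub>R'\<^esub> \<longleftrightarrow> r \<in> a' R S"
  by (simp add: FactRing_zero a'.rcos_eq_ideal_iff)

lemma ass_R_iff: "r \<in> ass_R R S \<longleftrightarrow> r \<in> carrier R \<and> lc r = \<zero>\<^bsub>U\<^esub>"
  unfolding ass_R_def a_kernel_def' by blast

lemma a'_cond_ass_R: "a'_cond R S (ass_R R S)"
  unfolding a'_cond_iff[OF ring_R S_subset]
proof (intro conjI ballI impI)
  show "ideal (ass_R R S) R" unfolding ass_R_def by (rule loc_can.kernel_is_ideal)
  fix s x assume s: "s \<in> S" and x: "x \<in> carrier R" and "s \<otimes>\<^bsub>R\<^esub> x \<in> ass_R R S"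
  then have z: "lc s \<otimes>\<^bsub>U\<^esub> lc x = \<zero>\<^bsub>U\<^esub>" by (simp add: ass_R_iff)
  have "lc x = (lx s \<otimes>\<^bsub>U\<^esub> lc s) \<otimes>\<^bsub>U\<^esub> lc x" using s x by (simp add: loc_x_loc_can)
  also have "\<dots> = lx s \<otimes>\<^bsub>U\<^esub> (lc s \<otimes>\<^bsub>U\<^esub> lc x)" using s x by (simp add: U.m_assoc)
  also have "\<dots> = \<zero>\<^bsub>U\<^esub>" using s by (simp add: z)
  finally show "x \<in> ass_R R S" using x by (simp add: ass_R_iff)
qed

lemma a'_subset_ass_R: "a' R S \<subseteq> ass_R R S"
  by (rule a'_least[OF ring_R S_subset a'_cond_ass_R])

lemma a'_eq_carrier_if_meets_S: "s \<in> S \<Longrightarrow> s \<in> a' R S \<Longrightarrow> a' R S = carrier R"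
  using a'_cancel[of s "\<one>\<^bsub>R\<^esub>"] a'.one_imp_carrier by simp

lemma S'_subset_C': "S' \<subseteq> C' R'"
  using a'_eq_Inter(2)[OF ring_R S_subset] by (auto simp: a'_cond_def)

lemma right_ore_set_S':
  assumes proper: "a' R S \<noteq> carrier R"
  shows "right_ore_set R' S'"
  unfolding right_ore_set_def mult_set_def
proof (intro conjI ballI)
  show "S' \<subseteq> carrier R'" by auto
  show "\<one>\<^bsub>R'\<^esub> \<in> S'" using one_in_S \<pi>'.hom_one by force
  show "\<zero>\<^bsub>R'\<^esub> \<notin> S'"
  proof
    assume "\<zero>\<^bsub>R'\<^esub> \<in> S'"
    then obtain s where s: "s \<in> S" and "\<pi>' s = \<zero>\<^bsub>R'\<^esub>" by force
    then have "s \<in> a' R S" using \<pi>'_eq_zero_iff by simp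
    then show False using a'_eq_carrier_if_meets_S[OF s] proper by simp
  qed
next
  fix s t assume "s \<in> S'" "t \<in> S'"
  then obtain s0 t0 where st: "s0 \<in> S" "t0 \<in> S" "s = \<pi>' s0" "t = \<pi>' t0" by blast
  then have "s \<otimes>\<^bsub>R'\<^esub> t = \<pi>' (s0 \<otimes>\<^bsub>R\<^esub> t0)" by simp
  then show "s \<otimes>\<^bsub>R'\<^esub> t \<in> S'" using mult_in_S[OF st(1,2)] by blast
next
  fix r s assume r: "r \<in> carrier R'" and "s \<in> S'"
  then obtain s0 where s0: "s0 \<in> S" and s: "s = \<pi>' s0" by blast
  obtain r0 where r0: "r0 \<in> carrier R" and rr: "r = \<pi>' r0" using r by (rule FactRing_carrierE)
  obtain t r' where t: "t \<in> S" and r': "r' \<in> carrier R" and e: "r0 \<otimes>\<^bsub>R\<^esub> t = s0 \<otimes>\<^bsub>R\<^esub> r'"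
    using ore_condition[OF r0 s0] by blast
  have "r \<otimes>\<^bsub>R'\<^esub> \<pi>' t = s \<otimes>\<^bsub>R'\<^esub> \<pi>' r'" using arg_cong[OF e, of \<pi>'] r0 s0 t r' s rr by simp
  moreover have "\<pi>' t \<in> S'" "\<pi>' r' \<in> carrier R'" using t r' by auto
  ultimately show "\<exists>t\<in>S'. \<exists>r'\<in>carrier R'. r \<otimes>\<^bsub>R'\<^esub> t = s \<otimes>\<^bsub>R'\<^esub> r'" by blast
qed

lemma right_denominator_set_S': "a' R S \<noteq> carrier R \<Longrightarrow> right_denominator_set R' S'"
  by (rule right_denominator_set_if_C'[OF a'.quotient_is_ring right_ore_set_S' S'_subset_C'])

lemma loc_can_eq_zero_cancel:
  assumes r: "r \<in> carrier R" and s: "s \<in> S" and z: "lc (r \<otimes>\<^bsub>R\<^esub> s) = \<zero>\<^bsub>U\<^esub>"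
  shows "lc r = \<zero>\<^bsub>U\<^esub>"
proof -
  have "lc r = (lc r \<otimes>\<^bsub>U\<^esub> lc s) \<otimes>\<^bsub>U\<^esub> lx s"
    using r s by (simp add: U.m_assoc loc_can_loc_x)
  also have "\<dots> = \<zero>\<^bsub>U\<^esub>" using z r s by simp
  finally show ?thesis .
qed

text \<open>The inclusion \<open>\<subseteq>\<close> needs a ring in which \<open>S'\<close> becomes invertible while exactly
  \<open>ass\<^sub>r(S')\<close> dies: the Ore localization of \<open>R'\<close> at \<open>S'\<close>, through which \<open>R\<langle>S\<^sup>-\<^sup>1\<rangle>\<close> maps.\<close>
lemma ass_R_eq_preimage:
  assumes proper: "a' R S \<noteq> carrier R"
  shows "ass_R R S = {r \<in> carrier R. \<pi>' r \<in> ass_r R' S'}"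
proof (intro equalityI subsetI)
  fix r assume "r \<in> ass_R R S"
  then have r: "r \<in> carrier R" and z: "lc r = \<zero>\<^bsub>U\<^esub>" by (auto simp: ass_R_iff)
  obtain L :: "('a set set \<times> 'a set set) set ring" and g where L: "ring L" and g: "g \<in> ring_hom R' L"
    and units: "\<And>t. t \<in> S' \<Longrightarrow> g t \<in> Units L" and ker: "\<And>x. x \<in> carrier R' \<Longrightarrow> g x = \<zero>\<^bsub>L\<^esub> \<Longrightarrow> x \<in> ass_r R' S'"
    using left_regular_ore_localization[OF a'.quotient_is_ring right_ore_set_S'[OF proper] S'_subset_C']
    by blast
  have units': "\<forall>s\<in>S. (g \<circ> \<pi>') s \<in> Units L" using units by simp
  obtain h where h: "h \<in> ring_hom U L" and h_lc: "\<forall>r\<in>carrier R. h (lc r) = (g \<circ> \<pi>') r"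
    using univ_loc_universal[OF L ring_hom_trans[OF \<pi>'.homh g] units'] by blast
  have "g (\<pi>' r) = h (lc r)" using h_lc r by simp
  also have "\<dots> = \<zero>\<^bsub>L\<^esub>" using z ring_hom_zero[OF h U.ring_axioms L] by simp
  finally have "g (\<pi>' r) = \<zero>\<^bsub>L\<^esub>" .
  then show "r \<in> {r \<in> carrier R. \<pi>' r \<in> ass_r R' S'}" using ker r by simp
next
  fix r assume "r \<in> {r \<in> carrier R. \<pi>' r \<in> ass_r R' S'}"
  then obtain s where r: "r \<in> carrier R" and s: "s \<in> S" and "\<pi>' r \<otimes>\<^bsub>R'\<^esub> \<pi>' s = \<zero>\<^bsub>R'\<^esub>"
    by (auto simp: ass_r_def)
  then have "r \<otimes>\<^bsub>R\<^esub> s \<in> ass_R R S"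
    using \<pi>'_eq_zero_iff[of "r \<otimes>\<^bsub>R\<^esub> s"] a'_subset_ass_R by auto
  then show "r \<in> ass_R R S"
    using loc_can_eq_zero_cancel[OF r s] r s by (simp add: ass_R_iff)
qed

lemma right_localizable_iff: "right_localizable R S \<longleftrightarrow> a' R S \<noteq> carrier R"
proof
  assume "right_localizable R S"
  then have "\<one>\<^bsub>R\<^esub> \<notin> ass_R R S" by (simp add: right_localizable_def ass_R_iff)
  then show "a' R S \<noteq> carrier R" using a'_subset_ass_R by auto
next
  assume proper: "a' R S \<noteq> carrier R"
  have "\<one>\<^bsub>U\<^esub> \<noteq> \<zero>\<^bsub>U\<^esub>"
  proof
    assume "\<one>\<^bsub>U\<^esub> = \<zero>\<^bsub>U\<^esub>"
    then have "\<one>\<^bsub>R\<^esub> \<in> ass_R R S" by (simp add: ass_R_iff)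
    then have "\<pi>' \<one>\<^bsub>R\<^esub> \<in> ass_r R' S'" using ass_R_eq_preimage[OF proper] by blast
    then obtain s where "s \<in> S" "\<pi>' s = \<zero>\<^bsub>R'\<^esub>" by (auto simp: ass_r_def)
    then show False using \<pi>'_eq_zero_iff a'_eq_carrier_if_meets_S proper by auto
  qed
  then show "right_localizable R S"
    unfolding right_localizable_def using univ_loc_right_fraction by blast
qed

lemma univ_loc_ring_of_fractions:
  assumes proper: "a' R S \<noteq> carrier R"
  shows "is_right_ring_of_fractions R' S' U (quot_lift lc)"
    and "\<And>r. r \<in> carrier R \<Longrightarrow> quot_lift lc (\<pi>' r) = lc r"
proof -
  have ker: "a' R S \<subseteq> a_kernel R U lc" using a'_subset_ass_R by (simp add: ass_R_def)
  note lift = quot_lift_rcos[OF ring_R U.ring_axioms ideal_a' loc_can_hom ker]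
  show "\<And>r. r \<in> carrier R \<Longrightarrow> quot_lift lc (\<pi>' r) = lc r" by (rule lift)
  have kernel_iff: "C \<in> a_kernel R' U (quot_lift lc) \<longleftrightarrow> C \<in> ass_r R' S'"
    if C_in: "C \<in> carrier R'" for C
  proof -
    obtain r where r: "r \<in> carrier R" and C: "C = \<pi>' r" using C_in by (rule FactRing_carrierE)
    have "C \<in> a_kernel R' U (quot_lift lc) \<longleftrightarrow> lc r = \<zero>\<^bsub>U\<^esub>"
      unfolding a_kernel_def' C using r by (simp add: lift)
    also have "\<dots> \<longleftrightarrow> r \<in> ass_R R S" using r by (simp add: ass_R_iff)
    also have "\<dots> \<longleftrightarrow> C \<in> ass_r R' S'" using ass_R_eq_preimage[OF proper] r C by blast
    finally show ?thesis .
  qed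
  have kernel: "a_kernel R' U (quot_lift lc) = ass_r R' S'"
  proof (intro equalityI subsetI)
    fix C assume C: "C \<in> a_kernel R' U (quot_lift lc)"
    then have "C \<in> carrier R'" by (simp add: a_kernel_def')
    with C show "C \<in> ass_r R' S'" using kernel_iff by blast
  next
    fix C assume C: "C \<in> ass_r R' S'"
    then have "C \<in> carrier R'" by (simp add: ass_r_def)
    with C show "C \<in> a_kernel R' U (quot_lift lc)" using kernel_iff by blast
  qed
  have generated: "\<exists>a\<in>carrier R'. \<exists>t\<in>S'. q = quot_lift lc a \<otimes>\<^bsub>U\<^esub> inv\<^bsub>U\<^esub> (quot_lift lc t)"
    if q: "q \<in> carrier U" for q
  proof -
    obtain r s where "r \<in> carrier R" "s \<in> S" "q = lc r \<otimes>\<^bsub>U\<^esub> lx s"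
      using univ_loc_right_fraction[OF q] by blast
    moreover have "lc r \<otimes>\<^bsub>U\<^esub> lx s = quot_lift lc (\<pi>' r) \<otimes>\<^bsub>U\<^esub> inv\<^bsub>U\<^esub> (quot_lift lc (\<pi>' s))"
      using calculation by (simp add: lift inv_loc_can)
    moreover have "\<pi>' r \<in> carrier R'" "\<pi>' s \<in> S'" using calculation by auto
    ultimately show ?thesis by blast
  qed
  show "is_right_ring_of_fractions R' S' U (quot_lift lc)"
    unfolding is_right_ring_of_fractions_def
  proof (intro conjI ballI)
    show "ring U" by (rule U.ring_axioms)
    show "quot_lift lc \<in> ring_hom R' U"
      by (rule quot_lift_hom[OF ring_R U.ring_axioms ideal_a' loc_can_hom ker])
    show "a_kernel R' U (quot_lift lc) = ass_r R' S'" by (rule kernel)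
  next
    fix t assume "t \<in> S'"
    then show "quot_lift lc t \<in> Units U" by (auto simp: lift loc_can_Units)
  next
    fix q assume "q \<in> carrier U"
    then show "\<exists>a\<in>carrier R'. \<exists>t\<in>S'. q = quot_lift lc a \<otimes>\<^bsub>U\<^esub> inv\<^bsub>U\<^esub> (quot_lift lc t)"
      by (rule generated)
  qed
qed

lemma univ_loc_iso_ring_of_fractions:
  fixes Q :: "'b ring"
  assumes proper: "a' R S \<noteq> carrier R" and fractions: "is_right_ring_of_fractions R' S' Q \<phi>"
  shows "\<exists>h. h \<in> ring_iso U Q \<and> (\<forall>r\<in>carrier R. h (lc r) = \<phi> (\<pi>' r))"
proof -
  note fractionsD = fractions[unfolded is_right_ring_of_fractions_def]
  have Q: "ring Q" and \<phi>: "\<phi> \<in> ring_hom R' Q" and units: "\<forall>t\<in>S'. \<phi> t \<in> Units Q"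
    and gen: "\<forall>q\<in>carrier Q. \<exists>a\<in>carrier R'. \<exists>t\<in>S'. q = \<phi> a \<otimes>\<^bsub>Q\<^esub> inv\<^bsub>Q\<^esub> (\<phi> t)"
    and ker: "a_kernel R' Q \<phi> = ass_r R' S'"
    using fractionsD by (blast, blast, blast, blast, blast)
  interpret Q: ring Q by (rule Q)
  interpret \<phi>: ring_hom_ring R' Q \<phi> by (intro ring_hom_ringI2 a'.quotient_is_ring Q \<phi>)
  have units': "\<forall>s\<in>S. (\<phi> \<circ> \<pi>') s \<in> Units Q" using units by simp
  obtain h where h: "h \<in> ring_hom U Q" and h_lc: "\<forall>r\<in>carrier R. h (lc r) = (\<phi> \<circ> \<pi>') r"
    and h_lx: "\<forall>s\<in>S. h (lx s) = inv\<^bsub>Q\<^esub> ((\<phi> \<circ> \<pi>') s)"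
    using univ_loc_universal[OF Q ring_hom_trans[OF \<pi>'.homh \<phi>] units'] by blast
  interpret h: ring_hom_ring U Q h by (intro ring_hom_ringI2 U.ring_axioms Q h)
  have "a_kernel U Q h \<subseteq> {\<zero>\<^bsub>U\<^esub>}"
  proof
    fix q assume "q \<in> a_kernel U Q h"
    then have q: "q \<in> carrier U" and hq: "h q = \<zero>\<^bsub>Q\<^esub>" unfolding a_kernel_def' by blast+
    obtain r s where r: "r \<in> carrier R" and s: "s \<in> S" and q_eq: "q = lc r \<otimes>\<^bsub>U\<^esub> lx s"
      using univ_loc_right_fraction[OF q] by blast
    have u: "\<phi> (\<pi>' s) \<in> Units Q" using units s by blast
    have "\<phi> (\<pi>' r) = (\<phi> (\<pi>' r) \<otimes>\<^bsub>Q\<^esub> inv\<^bsub>Q\<^esub> (\<phi> (\<pi>' s))) \<otimes>\<^bsub>Q\<^esub> \<phi> (\<pi>' s)"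
      using u r by (simp add: Q.m_assoc Q.Units_closed Q.Units_inv_closed Q.Units_l_inv)
    also have "\<phi> (\<pi>' r) \<otimes>\<^bsub>Q\<^esub> inv\<^bsub>Q\<^esub> (\<phi> (\<pi>' s)) = h q"
      using r s by (simp add: q_eq h_lc h_lx)
    finally have "\<phi> (\<pi>' r) = \<zero>\<^bsub>Q\<^esub>" using hq u by (simp add: Q.Units_closed)
    then have "\<pi>' r \<in> a_kernel R' Q \<phi>"
      using \<pi>'.hom_closed[OF r] unfolding a_kernel_def' by blast
    then have "r \<in> ass_R R S" using ker ass_R_eq_preimage[OF proper] r by simp
    then have "lc r = \<zero>\<^bsub>U\<^esub>" by (simp add: ass_R_iff)
    then show "q \<in> {\<zero>\<^bsub>U\<^esub>}" using q_eq s by simp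
  qed
  moreover have "\<zero>\<^bsub>U\<^esub> \<in> a_kernel U Q h"
    using h.hom_zero U.zero_closed unfolding a_kernel_def' by blast
  ultimately have "a_kernel U Q h = {\<zero>\<^bsub>U\<^esub>}" by (intro subset_antisym) simp_all
  then have "inj_on h (carrier U)" by (simp add: h.inj_iff_trivial_ker)
  moreover have "h ` carrier U = carrier Q"
  proof (intro equalityI subsetI)
    fix y assume "y \<in> carrier Q"
    then obtain a t where a: "a \<in> carrier R'" and t: "t \<in> S'" and y: "y = \<phi> a \<otimes>\<^bsub>Q\<^esub> inv\<^bsub>Q\<^esub> (\<phi> t)"
      using gen by blast
    obtain r where r: "r \<in> carrier R" "a = \<pi>' r" using a by (rule FactRing_carrierE)
    obtain s where s: "s \<in> S" "t = \<pi>' s" using t by blast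
    have "h (lc r \<otimes>\<^bsub>U\<^esub> lx s) = \<phi> (\<pi>' r) \<otimes>\<^bsub>Q\<^esub> inv\<^bsub>Q\<^esub> (\<phi> (\<pi>' s))"
      using r s by (simp add: h_lc h_lx)
    then have "y = h (lc r \<otimes>\<^bsub>U\<^esub> lx s)" using y r s by simp
    moreover have "lc r \<otimes>\<^bsub>U\<^esub> lx s \<in> carrier U" using r s by simp
    ultimately show "y \<in> h ` carrier U" by (rule image_eqI)
  qed auto
  ultimately have "h \<in> ring_iso U Q" using h unfolding ring_iso_def bij_betw_def by blast
  moreover have "\<forall>r\<in>carrier R. h (lc r) = \<phi> (\<pi>' r)" using h_lc by simp
  ultimately show ?thesis by blast
qed

end

theorem theorem2p11:
  fixes R :: "'a ring" and S :: "'a set"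
  assumes "ring R" and "right_ore_set R S"
  shows "(right_localizable R S \<longleftrightarrow> a' R S \<noteq> carrier R)
    \<and> (a' R S \<noteq> carrier R \<longrightarrow>
        (let R' = R Quot a' R S; \<pi>' = (\<lambda>r. a' R S +>\<^bsub>R\<^esub> r); S' = \<pi>' ` S in
           right_denominator_set R' S'
         \<and> ass_R R S = {r \<in> carrier R. \<pi>' r \<in> ass_r R' S'}
         \<and> (\<exists>\<psi>. is_right_ring_of_fractions R' S' (univ_loc R S) \<psi>
               \<and> (\<forall>r\<in>carrier R. \<psi> (\<pi>' r) = loc_can R S r))
         \<and> (\<forall>(Q :: 'b ring) \<phi>. is_right_ring_of_fractions R' S' Q \<phi> \<longrightarrow>
               (\<exists>h. h \<in> ring_iso (univ_loc R S) Q
                  \<and> (\<forall>r\<in>carrier R. h (loc_can R S r) = \<phi> (\<pi>' r))))))"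
proof -
  interpret ore_univ_localization R S
    using assms right_ore_setD(1)[OF assms(2)]
    by (intro ore_univ_localization.intro univ_localization.intro ore_univ_localization_axioms.intro)
  show ?thesis
    unfolding Let_def
    using right_localizable_iff right_denominator_set_S' ass_R_eq_preimage
      univ_loc_ring_of_fractions univ_loc_iso_ring_of_fractions
    by blast
qed

end
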